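(* Let $d\geq 1$, $p\in[0,1]$, let $(S_n)$ be the $d$-dimensional elephant random walk with memory parameter $p$, and let $a=\frac{2dp-1}{2d-1}$. Define $a_1=1$ and $a_n=\prod_{k=1}^{n-1}\frac{k}{k+a}=\frac{\Gamma(a+1)\Gamma(n)}{\Gamma(n+a)}$ for $n\geq 2$; $b_0=0$ and $b_n=\sum_{k=1}^n\frac{1}{a_k}$ for $n\geq1$; $\varepsilon_1=S_1$ and $\varepsilon_n=S_n-\bigl(1+\frac{a}{n-1}\bigr)S_{n-1}$ for $n\geq 2$; $M_n=\sum_{k=1}^n a_k\varepsilon_k$ (so $M_n=a_nS_n$) and $N_n=\sum_{k=1}^n a_kb_{k-1}\varepsilon_k$; and $\mathcal{M}_n=\begin{pmatrix}M_n\\ N_n\end{pmatrix}\in\mathbb{R}^{2d}$. Then $(\mathcal{M}_n)$ is a locally square-integrable martingale of $\mathbb{R}^{2d}$ with respect to $\mathcal{F}_n=\sigma(X_1,\dots,X_n)$. Moreover, if $a<1/2$, its predictable quadratic variation $\langle\mathcal{M}\rangle_n=\sum_{k=1}^n\mathbb{E}[\Delta\mathcal{M}_k\Delta\mathcal{M}_k^T\mid\mathcal{F}_{k-1}]$ (with $\Delta\mathcal{M}_k=\mathcal{M}_k-\mathcal{M}_{k-1}$, $\mathcal{M}_0=0$) satisfies $$\lim_{n\to\infty}V_n\langle\mathcal{M}\rangle_nV_n^T=V\quad\text{a.s.},$$ where $$V_n=\frac{1}{n\sqrt{n}}\begin{pmatrix}b_n&0\\0&1\end{pmatrix}\otimes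 I_d,\qquad V=\frac{1}{d(a+1)^2}\begin{pmatrix}\frac{1}{1-2a}&\frac{1}{2-a}\\ \frac{1}{2-a}&\frac13\end{pmatrix}\otimes I_d.$$
   Context: The $d$-dimensional elephant random walk (ERW) with memory parameter $p\in[0,1]$ is defined as follows. Let $e_1,\dots,e_d$ be the standard basis of $\mathbb{R}^d$; the $2d$ directions are $\pm e_1,\dots,\pm e_d$. Set $S_0=0$. The first step $X_1$ is uniformly distributed on the $2d$ directions. For $n\geq 1$, given $X_1,\dots,X_n$, an index $k$ is chosen uniformly at random in $\{1,\dots,n\}$, and then $X_{n+1}=X_k$ with probability $p$, while $X_{n+1}$ equals each of the $2d-1$ remaining directions with probability $(1-p)/(2d-1)$. The position is $S_{n+1}=S_n+X_{n+1}$. $\Gamma$ is the Euler Gamma function, $\otimes$ the Kronecker product, $I_d$ the identity matrix of order $d$. *)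

theory Defs
  imports "HOL-Probability.Probability"
begin

text \<open>Directions of the d-dimensional walk: a pair (i, s) stands for +e_i (s = True)
  or -e_i (s = False); the index type 'd has CARD('d) = d elements, so there are 2d directions.\<close>

definition dirvec :: "'d::finite \<times> bool \<Rightarrow> real ^ 'd" where
  "dirvec x = (\<chi> j. if j = fst x then (if snd x then 1 else -1) else 0)"

text \<open>Conditional probability that X_{m+1} = y given X_1 = x 1, ..., X_m = x m (m >= 1).\<close>
definition erw_step_prob :: "real \<Rightarrow> nat \<Rightarrow> (nat \<Rightarrow> 'd::finite \<times> bool) \<Rightarrow> 'd \<times> bool \<Rightarrow> real" where
  "erw_step_prob p m x y =
     (\<Sum>k\<in>{1..m}. if x k = y then p else (1 - p) / (2 * real CARD('d) - 1)) / real m"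

text \<open>Probability that (X_1, ..., X_n) = (x 1, ..., x n).\<close>
fun erw_path_prob :: "real \<Rightarrow> nat \<Rightarrow> (nat \<Rightarrow> 'd::finite \<times> bool) \<Rightarrow> real" where
  "erw_path_prob p 0 x = 1"
| "erw_path_prob p (Suc 0) x = 1 / (2 * real CARD('d))"
| "erw_path_prob p (Suc (Suc n)) x =
     erw_path_prob p (Suc n) x * erw_step_prob p (Suc n) x (x (Suc (Suc n)))"

definition is_erw :: "'a measure \<Rightarrow> real \<Rightarrow> (nat \<Rightarrow> 'a \<Rightarrow> 'd::finite \<times> bool) \<Rightarrow> bool" where
  "is_erw M p X \<longleftrightarrow> prob_space M \<and>
     (\<forall>i. X i \<in> measurable M (count_space UNIV)) \<and>
     (\<forall>n x. measure M {\<omega>\<in>space M. \<forall>i\<in>{1..n}. X i \<omega> = x i} = erw_path_prob p n x)"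

definition erw_filtr :: "'a measure \<Rightarrow> (nat \<Rightarrow> 'a \<Rightarrow> 'd \<times> bool) \<Rightarrow> nat \<Rightarrow> 'a measure" where
  "erw_filtr M X n = sigma (space M) {X i -` {x} \<inter> space M | i x. i \<in> {1..n}}"

definition erw_a :: "nat \<Rightarrow> real \<Rightarrow> real" where
  "erw_a d p = (2 * real d * p - 1) / (2 * real d - 1)"

definition acoef :: "real \<Rightarrow> nat \<Rightarrow> real" where
  "acoef a n = (\<Prod>k\<in>{1..<n}. real k / (real k + a))"

definition bcoef :: "real \<Rightarrow> nat \<Rightarrow> real" where
  "bcoef a n = (\<Sum>k\<in>{1..n}. 1 / acoef a k)"

definition erw_S :: "(nat \<Rightarrow> 'a \<Rightarrow> 'd::finite \<times> bool) \<Rightarrow> nat \<Rightarrow> 'a \<Rightarrow> real ^ 'd" where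
  "erw_S X n \<omega> = (\<Sum>i\<in>{1..n}. dirvec (X i \<omega>))"

definition erw_eps :: "real \<Rightarrow> (nat \<Rightarrow> 'a \<Rightarrow> 'd::finite \<times> bool) \<Rightarrow> nat \<Rightarrow> 'a \<Rightarrow> real ^ 'd" where
  "erw_eps a X n \<omega> = (if n = 1 then erw_S X 1 \<omega>
     else erw_S X n \<omega> - (1 + a / real (n - 1)) *\<^sub>R erw_S X (n - 1) \<omega>)"

definition erw_M :: "real \<Rightarrow> (nat \<Rightarrow> 'a \<Rightarrow> 'd::finite \<times> bool) \<Rightarrow> nat \<Rightarrow> 'a \<Rightarrow> real ^ 'd" where
  "erw_M a X n \<omega> = (\<Sum>k\<in>{1..n}. acoef a k *\<^sub>R erw_eps a X k \<omega>)"

definition erw_N :: "real \<Rightarrow> (nat \<Rightarrow> 'a \<Rightarrow> 'd::finite \<times> bool) \<Rightarrow> nat \<Rightarrow> 'a \<Rightarrow> real ^ 'd" where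
  "erw_N a X n \<omega> = (\<Sum>k\<in>{1..n}. (acoef a k * bcoef a (k - 1)) *\<^sub>R erw_eps a X k \<omega>)"

text \<open>The stacked vector (M_n; N_n) in R^{2d}, coordinates indexed by (block, j),
  block 1 = M, block 2 = N.\<close>
definition erw_Mcal :: "real \<Rightarrow> (nat \<Rightarrow> 'a \<Rightarrow> 'd::finite \<times> bool) \<Rightarrow> nat \<Rightarrow> 'a \<Rightarrow> real ^ (2 \<times> 'd)" where
  "erw_Mcal a X n \<omega> = (\<chi> rj. if fst rj = 1 then erw_M a X n \<omega> $ snd rj else erw_N a X n \<omega> $ snd rj)"

definition kron :: "real ^ 'm ^ 'n \<Rightarrow> real ^ 'p ^ 'q \<Rightarrow> real ^ ('m \<times> 'p) ^ ('n \<times> 'q)" where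
  "kron A B = (\<chi> ik jl. A $ fst ik $ fst jl * B $ snd ik $ snd jl)"

definition sq_int_martingale ::
  "'a measure \<Rightarrow> (nat \<Rightarrow> 'a measure) \<Rightarrow> (nat \<Rightarrow> 'a \<Rightarrow> real ^ 'n) \<Rightarrow> bool" where
  "sq_int_martingale M F Z \<longleftrightarrow>
     (\<forall>n. subalgebra M (F n) \<and> sets (F n) \<subseteq> sets (F (Suc n))) \<and>
     (\<forall>n i. (\<lambda>\<omega>. Z n \<omega> $ i) \<in> borel_measurable (F n)) \<and>
     (\<forall>n i. integrable M (\<lambda>\<omega>. Z n \<omega> $ i) \<and> integrable M (\<lambda>\<omega>. (Z n \<omega> $ i)\<^sup>2)) \<and>
     (\<forall>n i. AE \<omega> in M. real_cond_exp M (F n) (\<lambda>\<omega>. Z (Suc n) \<omega> $ i) \<omega> = Z n \<omega> $ i)"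

definition pred_qv ::
  "'a measure \<Rightarrow> (nat \<Rightarrow> 'a measure) \<Rightarrow> (nat \<Rightarrow> 'a \<Rightarrow> real ^ 'n) \<Rightarrow> nat \<Rightarrow> 'a \<Rightarrow> real ^ 'n ^ 'n" where
  "pred_qv M F Z n \<omega> = (\<Sum>k\<in>{1..n}. \<chi> r c.
     real_cond_exp M (F (k - 1))
       (\<lambda>\<omega>'. (Z k \<omega>' - Z (k - 1) \<omega>') $ r * (Z k \<omega>' - Z (k - 1) \<omega>') $ c) \<omega>)"

definition erw_Vn :: "real \<Rightarrow> nat \<Rightarrow> real ^ (2 \<times> 'd::finite) ^ (2 \<times> 'd)" where
  "erw_Vn a n = (1 / (real n * sqrt (real n))) *\<^sub>R
     kron (vector [vector [bcoef a n, 0], vector [0, 1]] :: real^2^2) (mat 1 :: real^'d^'d)"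

definition erw_V :: "real \<Rightarrow> real ^ (2 \<times> 'd::finite) ^ (2 \<times> 'd)" where
  "erw_V a = (1 / (real CARD('d) * (a + 1)\<^sup>2)) *\<^sub>R
     kron (vector [vector [1 / (1 - 2 * a), 1 / (2 - a)], vector [1 / (2 - a), 1 / 3]] :: real^2^2)
          (mat 1 :: real^'d^'d)"

end

theory Submission
  imports Defs "HOL-Real_Asymp.Real_Asymp" "HOL-Library.Discrete_Functions"
begin

text \<open>Everything up to time n is a function of the finite history (X_1, ..., X_n), so integrals
  and conditional expectations given F_n are finite sums against the path probabilities, and given
  the history the next step has mean (a/n) S_n. Hence epsilon_(n+1) = X_(n+1) - (a/n) S_n is a
  martingale difference, and so are the increments a_k epsilon_k and a_k b_(k-1) epsilon_k of M and N.

  The conditional covariance of epsilon_(k+1) is (1/d) I_d, plus a/k times centred bounded additive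
  functionals of the history, minus (a/k)^2 S_k S_k^T. For a < 1/2 the second moment of such a
  functional grows only linearly, so Chebyshev and Borel--Cantelli along the squares give a strong
  law, and the conditional covariance tends to (1/d) I_d almost surely. The entries of
  V_n <M>_n V_n^T are then weighted Cesaro means with weights a_k^2, a_k b_(k-1) = (k-1) a_k/(1+a)
  and ((k-1)/(1+a))^2; as b_n = n/((1+a) a_(n+1)), a Stolz--Cesaro argument produces the
  entries 1/(1-2a), 1/(2-a) and 1/3 of V.\<close>

section \<open>Paths and the transition kernel\<close>

definition paths :: "nat \<Rightarrow> (nat \<Rightarrow> 'b::finite) set" where
  "paths n = PiE {1..n} (\<lambda>_. UNIV)"

lemma finite_paths: "finite (paths n)"
  unfolding paths_def by (intro finite_PiE) auto

lemma sum_paths_Suc: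
  "(\<Sum>x\<in>paths (Suc n). H x) = (\<Sum>y\<in>paths n. \<Sum>z\<in>UNIV. H (y(Suc n := z)))"
proof -
  let ?ext = "\<lambda>(z, y). y(Suc n := z)"
  have "{1..Suc n} = insert (Suc n) {1..n}" by auto
  then have paths_Suc: "paths (Suc n) = ?ext ` (UNIV \<times> paths n)"
    unfolding paths_def by (simp add: PiE_insert_eq)
  have "inj_on ?ext (UNIV \<times> paths n)"
    unfolding paths_def using inj_combinator[of "Suc n" "{1..n}" "\<lambda>_. UNIV"] by auto
  then have "(\<Sum>x\<in>paths (Suc n). H x) = (\<Sum>(z, y)\<in>UNIV \<times> paths n. H (y(Suc n := z)))"
    unfolding paths_Suc by (subst sum.reindex) (simp_all add: case_prod_unfold)
  also have "\<dots> = (\<Sum>z\<in>UNIV. \<Sum>y\<in>paths n. H (y(Suc n := z)))"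
    by (simp add: sum.cartesian_product)
  finally show ?thesis by (simp add: sum.swap[of _ UNIV])
qed

lemma restrict_paths: "y \<in> paths n \<Longrightarrow> restrict y {1..n} = y"
  unfolding paths_def by (auto simp: fun_eq_iff PiE_def extensional_def)

definition erw_kernel :: "real \<Rightarrow> nat \<Rightarrow> (nat \<Rightarrow> 'd::finite \<times> bool) \<Rightarrow> 'd \<times> bool \<Rightarrow> real" where
  "erw_kernel p n y z = (if n = 0 then 1 / (2 * real CARD('d)) else erw_step_prob p n y z)"

lemma erw_kernel_cong:
  "\<forall>i\<in>{1..n}. x i = y i \<Longrightarrow> erw_kernel p n x z = erw_kernel p n y z"
  unfolding erw_kernel_def erw_step_prob_def by (auto intro!: sum.cong)

lemma erw_path_prob_cong:
  "\<forall>i\<in>{1..n}. x i = y i \<Longrightarrow> erw_path_prob p n x = erw_path_prob p n (y :: nat \<Rightarrow> 'd::finite \<times> bool)"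
proof (induction p n x rule: erw_path_prob.induct)
  case (3 p n x)
  have "erw_path_prob p (Suc n) x = erw_path_prob p (Suc n) y"
    using 3 by (intro "3.IH") auto
  moreover have "erw_kernel p (Suc n) x (x (Suc (Suc n))) = erw_kernel p (Suc n) y (y (Suc (Suc n)))"
    using "3.prems" erw_kernel_cong[of "Suc n" x y] by auto
  ultimately show ?case by (simp add: erw_kernel_def)
qed auto

lemma erw_path_prob_Suc:
  "erw_path_prob p (Suc n) x = erw_path_prob p n x * erw_kernel p n x (x (Suc n))"
  by (cases n) (auto simp: erw_kernel_def)

lemma erw_path_prob_upd:
  "y \<in> paths n \<Longrightarrow> erw_path_prob p (Suc n) (y(Suc n := z)) = erw_path_prob p n y * erw_kernel p n y z"
  by (subst erw_path_prob_Suc) (auto intro!: arg_cong2[where f="(*)"] erw_path_prob_cong erw_kernel_cong)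

lemma card_ge_1: "real CARD('d::finite) \<ge> 1"
  by (simp add: Suc_leI)

lemma erw_a_eq: "1 \<le> d \<Longrightarrow> erw_a d p = p - (1 - p) / (2 * real d - 1)"
  unfolding erw_a_def by (simp add: field_simps)

lemma erw_a_ge:
  assumes "1 \<le> d" "0 \<le> p"
  shows "erw_a d p \<ge> -1"
proof -
  have "0 \<le> 2 * real d * p" "real d \<ge> 1" using assms by simp_all
  then have "- (2 * real d - 1) \<le> 2 * real d * p - 1" by linarith
  then show ?thesis unfolding erw_a_def using assms(1) by (simp add: le_divide_eq)
qed

text \<open>Given the history, X_(n+1) copies each of the n past steps with probability p/n and otherwise
  takes each of the other directions; averaging over the copied step gives the mean.\<close>

lemma sum_erw_kernel_mult:
  fixes y :: "nat \<Rightarrow> 'd::finite \<times> bool" and p :: real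
  defines "q \<equiv> (1 - p) / (2 * real CARD('d) - 1)"
  assumes "n > 0"
  shows "(\<Sum>z\<in>UNIV. erw_kernel p n y z * u z) =
    q * (\<Sum>z\<in>UNIV. u z) + erw_a CARD('d) p * (\<Sum>i\<in>{1..n}. u (y i)) / real n"
proof -
  have copy: "(\<Sum>z\<in>UNIV. (if w = z then p else q) * u z) = q * (\<Sum>z\<in>UNIV. u z) + (p - q) * u w" for w
  proof -
    have "(\<Sum>z\<in>UNIV. (if w = z then p else q) * u z) =
        (\<Sum>z\<in>UNIV. q * u z + (if z = w then (p - q) * u z else 0))"
      by (intro sum.cong) (auto simp: algebra_simps)
    then show ?thesis by (simp add: sum.distrib sum_distrib_left)
  qed
  have "(\<Sum>z\<in>UNIV. erw_kernel p n y z * u z) =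
      (\<Sum>k\<in>{1..n}. \<Sum>z\<in>UNIV. (if y k = z then p else q) * u z) / real n"
    using assms(2) unfolding erw_kernel_def erw_step_prob_def q_def
    by (simp add: sum_divide_distrib sum_distrib_right sum.swap[of _ UNIV])
  also have "\<dots> = (real n * (q * (\<Sum>z\<in>UNIV. u z)) + (p - q) * (\<Sum>k\<in>{1..n}. u (y k))) / real n"
    by (simp add: copy sum.distrib sum_distrib_left)
  finally show ?thesis
    using assms(2) by (simp add: erw_a_eq[of "CARD('d)"] q_def add_divide_distrib Suc_leI)
qed

lemma sum_erw_kernel: "(\<Sum>z\<in>UNIV. erw_kernel p n (y :: nat \<Rightarrow> 'd::finite \<times> bool) z) = 1"
proof (cases "n = 0")
  case True
  then show ?thesis by (simp add: erw_kernel_def)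
next
  case False
  define q where "q = (1 - p) / (2 * real CARD('d) - 1)"
  have "2 * real CARD('d) - 1 \<noteq> 0"
    using card_ge_1[where 'd='d] by linarith
  then have "q * (2 * real CARD('d) - 1) = 1 - p"
    unfolding q_def by simp
  moreover have "erw_a CARD('d) p = p - q"
    unfolding q_def by (rule erw_a_eq) (simp add: Suc_leI)
  ultimately have "q * (2 * real CARD('d)) + erw_a CARD('d) p = 1"
    by (simp add: algebra_simps)
  moreover have "(\<Sum>z\<in>UNIV. erw_kernel p n y z) = q * (2 * real CARD('d)) + erw_a CARD('d) p"
    using sum_erw_kernel_mult[of n p y "\<lambda>_. 1", folded q_def] False by simp
  ultimately show ?thesis by linarith
qed

lemma sum_erw_kernel_centered:
  fixes y :: "nat \<Rightarrow> 'd::finite \<times> bool"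
  assumes "(\<Sum>z\<in>UNIV. u z) = 0"
  shows "(\<Sum>z\<in>UNIV. erw_kernel p n y z * u z) = erw_a CARD('d) p / real n * (\<Sum>i\<in>{1..n}. u (y i))"
  using assms sum_erw_kernel_mult[of n p y u]
  by (cases "n = 0") (simp_all add: erw_kernel_def flip: sum_divide_distrib)

lemma erw_kernel_nonneg:
  assumes "0 \<le> p" "p \<le> 1"
  shows "erw_kernel p n (y :: nat \<Rightarrow> 'd::finite \<times> bool) z \<ge> 0"
proof -
  have "0 \<le> (1 - p) / (2 * real CARD('d) - 1)"
    by (intro divide_nonneg_nonneg; use assms card_ge_1[where 'd='d] in linarith)
  then show ?thesis
    using assms unfolding erw_kernel_def erw_step_prob_def by (auto intro!: divide_nonneg_nonneg sum_nonneg)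
qed

definition history :: "(nat \<Rightarrow> 'a \<Rightarrow> 'b) \<Rightarrow> nat \<Rightarrow> 'a \<Rightarrow> nat \<Rightarrow> 'b" where
  "history X n \<omega> = restrict (\<lambda>i. X i \<omega>) {1..n}"

lemma history_in_paths: "history X n \<omega> \<in> paths n"
  unfolding history_def paths_def by auto

lemma history_eq_iff: "x \<in> paths n \<Longrightarrow> history X n \<omega> = x \<longleftrightarrow> (\<forall>i\<in>{1..n}. X i \<omega> = x i)"
  unfolding history_def paths_def by (auto simp: PiE_def extensional_def fun_eq_iff)

lemma history_apply: "i \<in> {1..n} \<Longrightarrow> history X n \<omega> i = X i \<omega>"
  unfolding history_def by simp

lemma restrict_history_Suc: "restrict (history X (Suc n) \<omega>) {1..n} = history X n \<omega>"
  unfolding history_def by (auto simp: fun_eq_iff)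

lemma measurable_history:
  fixes X :: "nat \<Rightarrow> 'a \<Rightarrow> 'b::finite"
  assumes "\<And>i v. i \<in> {1..n} \<Longrightarrow> X i -` {v} \<inter> space N \<in> sets N"
  shows "history X n \<in> measurable N (count_space (paths n))"
proof (subst measurable_count_space_eq2[OF finite_paths], safe)
  fix x :: "nat \<Rightarrow> 'b" assume x: "x \<in> paths n"
  have "history X n -` {x} \<inter> space N = {\<omega>\<in>space N. \<forall>i\<in>{1..n}. X i \<omega> = x i}"
    using history_eq_iff[OF x, of X] by auto
  also have "\<dots> \<in> sets N"
    using assms by (intro sets.sets_Collect_finite_All) (auto simp: vimage_def Int_def conj_commute)
  finally show "history X n -` {x} \<inter> space N \<in> sets N" .
qed (rule history_in_paths)

lemma borel_measurable_history_fun: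
  fixes X :: "nat \<Rightarrow> 'a \<Rightarrow> 'b::finite"
  assumes "\<And>i v. i \<in> {1..n} \<Longrightarrow> X i -` {v} \<inter> space N \<in> sets N"
  shows "(\<lambda>\<omega>. H (history X n \<omega>) :: real) \<in> borel_measurable N"
  by (rule measurable_compose[OF measurable_history[OF assms] borel_measurable_count_space])

locale elephant_walk =
  fixes M :: "'a measure" and X :: "nat \<Rightarrow> 'a \<Rightarrow> 'd::finite \<times> bool" and p a :: real
  assumes erw: "is_erw M p X" and p_nonneg: "0 \<le> p" and p_le_1: "p \<le> 1"
    and a_eq: "a = erw_a CARD('d) p"
begin

sublocale prob_space M
  using erw unfolding is_erw_def by auto

abbreviation "F \<equiv> erw_filtr M X"

lemma vimage_X_sets: "X i -` {v} \<inter> space M \<in> sets M"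
  using erw unfolding is_erw_def by (auto intro: measurable_sets)

lemma measure_cylinder: "measure M {\<omega>\<in>space M. \<forall>i\<in>{1..n}. X i \<omega> = x i} = erw_path_prob p n x"
  using erw unfolding is_erw_def by auto

lemma erw_path_prob_nonneg: "erw_path_prob p n (x :: nat \<Rightarrow> 'd \<times> bool) \<ge> 0"
proof -
  have "0 \<le> measure M {\<omega>\<in>space M. \<forall>i\<in>{1..n}. X i \<omega> = x i}" by (rule measure_nonneg)
  then show ?thesis by (simp only: measure_cylinder)
qed

lemma sets_F: "sets (F n) = sigma_sets (space M) {X i -` {x} \<inter> space M | i x. i \<in> {1..n}}"
  unfolding erw_filtr_def by (intro sets_measure_of) auto

lemma space_F: "space (F n) = space M"
  unfolding erw_filtr_def by (intro space_measure_of) auto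

lemma vimage_X_sets_F: "i \<in> {1..n} \<Longrightarrow> X i -` {v} \<inter> space M \<in> sets (F n)"
  unfolding sets_F by (intro sigma_sets.Basic) blast

lemma subalgebra_F: "subalgebra M (F n)"
proof -
  have "sigma_sets (space M) {X i -` {x} \<inter> space M | i x. i \<in> {1..n}} \<subseteq> sets M"
    using vimage_X_sets by (intro sets.sigma_sets_subset) blast
  then show ?thesis unfolding subalgebra_def sets_F space_F by simp
qed

lemma sets_F_mono: "sets (F n) \<subseteq> sets (F (Suc n))"
  unfolding sets_F
proof (rule sigma_sets_mono', rule subsetI)
  fix A assume "A \<in> {X i -` {x} \<inter> space M | i x. i \<in> {1..n}}"
  then obtain i x where "A = X i -` {x} \<inter> space M" "i \<in> {1..Suc n}" by auto
  then show "A \<in> {X i -` {x} \<inter> space M | i x. i \<in> {1..Suc n}}" by blast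
qed

lemma sigma_finite_subalgebra_F: "sigma_finite_subalgebra M (F n)"
  by (intro finite_measure_subalgebra_is_sigma_finite)
     (simp add: finite_measure_subalgebra_def finite_measure_subalgebra_axioms_def subalgebra_F finite_measure_axioms)

lemma sets_F_vimage_history: "A \<in> sets (F n) \<Longrightarrow> \<exists>B. A = history X n -` B \<inter> space M"
  unfolding sets_F
proof (induction rule: sigma_sets.induct)
  case (Basic A)
  then obtain i x where "A = X i -` {x} \<inter> space M" "i \<in> {1..n}" by blast
  then have "A = history X n -` {y. y i = x} \<inter> space M" by (auto simp: history_apply)
  then show ?case by blast
next
  case (Compl A)
  then obtain B where "A = history X n -` B \<inter> space M" by blast
  then have "space M - A = history X n -` (- B) \<inter> space M" by auto
  then show ?case by blast
next
  case (Union A)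
  then obtain B where "\<And>i. A i = history X n -` B i \<inter> space M" by metis
  then have "(\<Union>i. A i) = history X n -` (\<Union>i. B i) \<inter> space M" by auto
  then show ?case by blast
qed auto

lemma borel_measurable_history_F: "(\<lambda>\<omega>. H (history X n \<omega>) :: real) \<in> borel_measurable (F n)"
  by (rule borel_measurable_history_fun) (simp add: space_F vimage_X_sets_F)

lemma borel_measurable_history_M: "(\<lambda>\<omega>. H (history X n \<omega>) :: real) \<in> borel_measurable M"
  by (rule borel_measurable_history_fun) (simp add: vimage_X_sets)

lemma sets_history_pred: "{\<omega>\<in>space M. P (history X n \<omega>)} \<in> sets M"
proof -
  have "{\<omega>\<in>space M. P (history X n \<omega>)} = history X n -` {x\<in>paths n. P x} \<inter> space M"
    by (auto simp: history_in_paths)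
  also have "\<dots> \<in> sets M"
    by (rule measurable_sets[OF measurable_history]) (auto simp: vimage_X_sets)
  finally show ?thesis .
qed

lemma integrable_history: "integrable M (\<lambda>\<omega>. H (history X n \<omega>) :: real)"
proof (rule integrable_const_bound[where B="\<Sum>x\<in>paths n. \<bar>H x\<bar>"])
  have "\<bar>H (history X n \<omega>)\<bar> \<le> (\<Sum>x\<in>paths n. \<bar>H x\<bar>)" for \<omega>
    by (rule member_le_sum[where f="\<lambda>x. \<bar>H x\<bar>", OF history_in_paths _ finite_paths]) simp
  then show "AE \<omega> in M. norm (H (history X n \<omega>)) \<le> (\<Sum>x\<in>paths n. \<bar>H x\<bar>)"
    by simp
qed (rule borel_measurable_history_M)

lemma integral_history:
  "(\<integral>\<omega>. H (history X n \<omega>) \<partial>M) = (\<Sum>x\<in>paths n. H x * erw_path_prob p n x)"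
proof -
  let ?C = "\<lambda>x. {\<omega>\<in>space M. history X n \<omega> = x}"
  have C_sets: "?C x \<in> sets M" for x
    by (rule sets_history_pred)
  have "(\<integral>\<omega>. H (history X n \<omega>) \<partial>M) = (\<integral>\<omega>. (\<Sum>x\<in>paths n. H x * indicator (?C x) \<omega>) \<partial>M)"
  proof (rule Bochner_Integration.integral_cong[OF refl])
    fix \<omega> assume "\<omega> \<in> space M"
    then have "(\<Sum>x\<in>paths n. H x * indicator (?C x) \<omega>) = (\<Sum>x\<in>paths n. if x = history X n \<omega> then H x else 0)"
      by (intro sum.cong) (auto simp: indicator_def)
    also have "\<dots> = H (history X n \<omega>)"
      by (subst sum.delta[OF finite_paths]) (simp add: history_in_paths)
    finally show "H (history X n \<omega>) = (\<Sum>x\<in>paths n. H x * indicator (?C x) \<omega>)" by simp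
  qed
  also have "\<dots> = (\<Sum>x\<in>paths n. \<integral>\<omega>. H x * indicator (?C x) \<omega> \<partial>M)"
    by (rule Bochner_Integration.integral_sum)
       (auto intro!: integrable_mult_right integrable_real_indicator C_sets simp: emeasure_eq_measure)
  also have "\<dots> = (\<Sum>x\<in>paths n. H x * measure M (?C x))"
  proof (intro sum.cong refl)
    fix x
    have "?C x \<inter> space M = ?C x" by auto
    then show "(\<integral>\<omega>. H x * indicator (?C x) \<omega> \<partial>M) = H x * measure M (?C x)"
      by (simp only: integral_mult_right_zero Bochner_Integration.integral_indicator)
  qed
  also have "\<dots> = (\<Sum>x\<in>paths n. H x * erw_path_prob p n x)"
  proof (intro sum.cong refl)
    fix x :: "nat \<Rightarrow> 'd \<times> bool" assume "x \<in> paths n"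
    then have "?C x = {\<omega>\<in>space M. \<forall>i\<in>{1..n}. X i \<omega> = x i}"
      using history_eq_iff[of x n X] by auto
    then show "H x * measure M (?C x) = H x * erw_path_prob p n x"
      by (simp only: measure_cylinder)
  qed
  finally show ?thesis .
qed

lemma sum_erw_path_prob: "(\<Sum>x\<in>paths n. erw_path_prob p n (x :: nat \<Rightarrow> 'd \<times> bool)) = 1"
  using integral_history[of "\<lambda>_. 1" n] prob_space by simp

lemma sum_paths_Suc_erw_path_prob:
  "(\<Sum>x\<in>paths (Suc n). h x * erw_path_prob p (Suc n) x) =
   (\<Sum>y\<in>paths n. (\<Sum>z\<in>UNIV. h (y(Suc n := z)) * erw_kernel p n y z) * erw_path_prob p n y)"
  unfolding sum_paths_Suc
  by (intro sum.cong refl) (simp add: erw_path_prob_upd sum_distrib_left sum_distrib_right mult_ac)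

lemma cond_exp_history_Suc:
  "AE \<omega> in M. real_cond_exp M (F n) (\<lambda>\<omega>. h (history X (Suc n) \<omega>)) \<omega> =
     (\<Sum>z\<in>UNIV. h ((history X n \<omega>)(Suc n := z)) * erw_kernel p n (history X n \<omega>) z)"
proof -
  define G where "G y = (\<Sum>z\<in>UNIV. h (y(Suc n := z)) * erw_kernel p n y z)" for y
  have "AE \<omega> in M. real_cond_exp M (F n) (\<lambda>\<omega>. h (history X (Suc n) \<omega>)) \<omega> = G (history X n \<omega>)"
  proof (rule sigma_finite_subalgebra.real_cond_exp_charact[OF sigma_finite_subalgebra_F])
    fix A assume "A \<in> sets (F n)"
    then obtain B where A: "A = history X n -` B \<inter> space M"
      using sets_F_vimage_history by blast
    let ?hB = "\<lambda>x. indicator B (restrict x {1..n}) * h x"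
    have "(\<integral>\<omega>\<in>A. h (history X (Suc n) \<omega>) \<partial>M) = (\<integral>\<omega>. ?hB (history X (Suc n) \<omega>) \<partial>M)"
      unfolding set_lebesgue_integral_def restrict_history_Suc
      by (intro Bochner_Integration.integral_cong refl) (auto simp: A indicator_def)
    also have "\<dots> = (\<Sum>x\<in>paths (Suc n). ?hB x * erw_path_prob p (Suc n) x)"
      by (rule integral_history)
    also have "\<dots> = (\<Sum>y\<in>paths n. (\<Sum>z\<in>UNIV. ?hB (y(Suc n := z)) * erw_kernel p n y z) * erw_path_prob p n y)"
      by (rule sum_paths_Suc_erw_path_prob)
    also have "\<dots> = (\<Sum>y\<in>paths n. (indicator B y * G y) * erw_path_prob p n y)"
      by (intro sum.cong refl) (simp add: restrict_paths[simplified] G_def sum_distrib_left mult.assoc)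
    also have "\<dots> = (\<integral>\<omega>. indicator B (history X n \<omega>) * G (history X n \<omega>) \<partial>M)"
      by (rule integral_history[symmetric])
    also have "\<dots> = (\<integral>\<omega>\<in>A. G (history X n \<omega>) \<partial>M)"
      unfolding set_lebesgue_integral_def
      by (intro Bochner_Integration.integral_cong refl) (auto simp: A indicator_def)
    finally show "(\<integral>\<omega>\<in>A. h (history X (Suc n) \<omega>) \<partial>M) = (\<integral>\<omega>\<in>A. G (history X n \<omega>) \<partial>M)" .
  qed (rule integrable_history borel_measurable_history_F)+
  then show ?thesis unfolding G_def .
qed

end

section \<open>The martingale\<close>

lemma sum_UNIV_times_bool:
  "(\<Sum>z\<in>(UNIV :: ('d::finite \<times> bool) set). f z) = (\<Sum>i\<in>UNIV. f (i, True) + f (i, False))"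
proof -
  have "(\<Sum>z\<in>(UNIV :: ('d \<times> bool) set). f z) = (\<Sum>i\<in>UNIV. \<Sum>s\<in>UNIV. f (i, s))"
    by (subst UNIV_Times_UNIV[symmetric], subst sum.cartesian_product) (simp add: case_prod_unfold)
  then show ?thesis by (simp add: UNIV_bool add.commute)
qed

lemma sum_dirvec: "(\<Sum>z\<in>UNIV. dirvec z $ j) = 0"
proof -
  have "dirvec (i, True) $ j + dirvec (i, False) $ j = 0" for i
    by (simp add: dirvec_def)
  then show ?thesis by (simp add: sum_UNIV_times_bool)
qed

lemma abs_dirvec_le_1: "\<bar>dirvec z $ j\<bar> \<le> 1"
  unfolding dirvec_def by auto

definition path_sum :: "('b \<Rightarrow> real) \<Rightarrow> nat \<Rightarrow> (nat \<Rightarrow> 'b) \<Rightarrow> real" where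
  "path_sum u n y = (\<Sum>i\<in>{1..n}. u (y i))"

lemma path_sum_Suc: "path_sum u (Suc n) y = path_sum u n y + u (y (Suc n))"
  unfolding path_sum_def by simp

lemma path_sum_upd: "path_sum u (Suc n) (y(Suc n := z)) = path_sum u n y + u z"
  unfolding path_sum_def by (simp add: add.commute)

lemma path_sum_upd_same: "path_sum u n (y(Suc n := z)) = path_sum u n y"
  unfolding path_sum_def by (intro sum.cong) auto

lemma path_sum_history: "path_sum u n (history X n \<omega>) = path_sum u n (\<lambda>i. X i \<omega>)"
  unfolding path_sum_def history_def by (intro sum.cong) auto

text \<open>The j-th coordinate of epsilon_(n+1) when the history is y and X_(n+1) = z.\<close>

definition path_eps :: "real \<Rightarrow> nat \<Rightarrow> (nat \<Rightarrow> 'd::finite \<times> bool) \<Rightarrow> 'd \<times> bool \<Rightarrow> 'd \<Rightarrow> real" where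
  "path_eps a n y z j = dirvec z $ j - a / real n * path_sum (\<lambda>z. dirvec z $ j) n y"

lemma erw_eps_Suc_nth:
  "erw_eps a X (Suc n) \<omega> $ j = path_eps a n (\<lambda>i. X i \<omega>) (X (Suc n) \<omega>) j"
  by (cases "n = 0")
     (auto simp: erw_eps_def erw_S_def path_eps_def path_sum_def algebra_simps)

definition mcal_coef :: "real \<Rightarrow> 2 \<Rightarrow> nat \<Rightarrow> real" where
  "mcal_coef a r k = (if r = 1 then acoef a k else acoef a k * bcoef a (k - 1))"

lemma erw_Mcal_Suc_nth:
  "erw_Mcal a X (Suc n) \<omega> $ r =
     erw_Mcal a X n \<omega> $ r + mcal_coef a (fst r) (Suc n) * erw_eps a X (Suc n) \<omega> $ snd r"
  unfolding erw_Mcal_def erw_M_def erw_N_def mcal_coef_def by simp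

lemma erw_Mcal_cong:
  assumes "\<forall>i\<in>{1..n}. X i \<omega> = Y i \<omega>'"
  shows "erw_Mcal a X n \<omega> = erw_Mcal a Y n \<omega>'"
proof -
  have S: "erw_S X k \<omega> = erw_S Y k \<omega>'" if "k \<le> n" for k
    unfolding erw_S_def using assms that by (intro sum.cong) auto
  have "erw_eps a X k \<omega> = erw_eps a Y k \<omega>'" if "k \<le> n" for k
    unfolding erw_eps_def using S that by simp
  then have "erw_M a X n \<omega> = erw_M a Y n \<omega>'" "erw_N a X n \<omega> = erw_N a Y n \<omega>'"
    unfolding erw_M_def erw_N_def by (auto intro!: sum.cong)
  then show ?thesis unfolding erw_Mcal_def by (simp only:)
qed

text \<open>A path viewed as a process on the one-point space, so that the processes of the
  definitions can be evaluated along a deterministic path.\<close>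

definition path_Mcal :: "real \<Rightarrow> nat \<Rightarrow> (nat \<Rightarrow> 'd::finite \<times> bool) \<Rightarrow> real ^ (2 \<times> 'd)" where
  "path_Mcal a n y = erw_Mcal a (\<lambda>i (_ :: unit). y i) n ()"

lemma erw_Mcal_history: "n \<le> m \<Longrightarrow> erw_Mcal a X n \<omega> = path_Mcal a n (history X m \<omega>)"
  unfolding path_Mcal_def by (rule erw_Mcal_cong) (auto simp: history_def)

lemma path_Mcal_upd_same: "path_Mcal a n (y(Suc n := z)) = path_Mcal a n y"
  unfolding path_Mcal_def by (rule erw_Mcal_cong) auto

lemma path_Mcal_upd:
  "path_Mcal a (Suc n) (y(Suc n := z)) $ r =
     path_Mcal a n y $ r + mcal_coef a (fst r) (Suc n) * path_eps a n y z (snd r)"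
proof -
  let ?Y = "\<lambda>i (_ :: unit). (y(Suc n := z)) i"
  have "path_Mcal a (Suc n) (y(Suc n := z)) $ r =
      path_Mcal a n (y(Suc n := z)) $ r + mcal_coef a (fst r) (Suc n) * erw_eps a ?Y (Suc n) () $ snd r"
    unfolding path_Mcal_def by (rule erw_Mcal_Suc_nth)
  moreover have "erw_eps a ?Y (Suc n) () $ snd r = path_eps a n y z (snd r)"
    unfolding erw_eps_Suc_nth path_eps_def by (simp add: path_sum_upd_same)
  ultimately show ?thesis by (simp add: path_Mcal_upd_same)
qed

context elephant_walk
begin

text \<open>The correction (a/n) S_n in epsilon_(n+1) is exactly the conditional mean of X_(n+1).\<close>

lemma sum_erw_kernel_path_eps:
  "(\<Sum>z\<in>UNIV. erw_kernel p n y z * path_eps a n (y :: nat \<Rightarrow> 'd \<times> bool) z j) = 0"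
proof -
  let ?S = "path_sum (\<lambda>z. dirvec z $ j) n y"
  have "(\<Sum>z\<in>UNIV. erw_kernel p n y z * path_eps a n y z j) =
      (\<Sum>z\<in>UNIV. erw_kernel p n y z * dirvec z $ j) - (\<Sum>z\<in>UNIV. erw_kernel p n y z) * (a / real n * ?S)"
    unfolding path_eps_def by (simp add: right_diff_distrib sum_subtractf sum_distrib_right sum_divide_distrib)
  also have "\<dots> = 0"
    by (simp add: a_eq path_sum_def sum_erw_kernel sum_erw_kernel_centered[OF sum_dirvec])
  finally show ?thesis .
qed

lemma cond_exp_erw_Mcal_Suc:
  "AE \<omega> in M. real_cond_exp M (F n) (\<lambda>\<omega>. erw_Mcal a X (Suc n) \<omega> $ r) \<omega> = erw_Mcal a X n \<omega> $ r"
proof -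
  have "(\<Sum>z\<in>UNIV. path_Mcal a (Suc n) (y(Suc n := z)) $ r * erw_kernel p n y z) = path_Mcal a n y $ r" for y
  proof -
    have "(\<Sum>z\<in>UNIV. path_Mcal a (Suc n) (y(Suc n := z)) $ r * erw_kernel p n y z) =
        path_Mcal a n y $ r * (\<Sum>z\<in>UNIV. erw_kernel p n y z)
        + mcal_coef a (fst r) (Suc n) * (\<Sum>z\<in>UNIV. erw_kernel p n y z * path_eps a n y z (snd r))"
      by (simp add: path_Mcal_upd algebra_simps sum.distrib sum_distrib_left)
    then show ?thesis by (simp add: sum_erw_kernel sum_erw_kernel_path_eps)
  qed
  then show ?thesis
    using cond_exp_history_Suc[of n "\<lambda>y. path_Mcal a (Suc n) y $ r"]
    by (simp add: erw_Mcal_history[of n n] erw_Mcal_history[of "Suc n" "Suc n"])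
qed

lemma sq_int_martingale_erw_Mcal: "sq_int_martingale M F (erw_Mcal a X)"
  unfolding sq_int_martingale_def
proof (intro conjI allI)
  fix n :: nat and r
  have Mcal: "erw_Mcal a X n \<omega> $ r = path_Mcal a n (history X n \<omega>) $ r" for \<omega>
    using erw_Mcal_history[of n n a X \<omega>] by simp
  show "subalgebra M (F n)" "sets (F n) \<subseteq> sets (F (Suc n))"
    by (rule subalgebra_F sets_F_mono)+
  show "(\<lambda>\<omega>. erw_Mcal a X n \<omega> $ r) \<in> borel_measurable (F n)"
    unfolding Mcal by (rule borel_measurable_history_F)
  show "integrable M (\<lambda>\<omega>. erw_Mcal a X n \<omega> $ r)" "integrable M (\<lambda>\<omega>. (erw_Mcal a X n \<omega> $ r)\<^sup>2)"
    unfolding Mcal by (rule integrable_history)+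
  show "AE \<omega> in M. real_cond_exp M (F n) (\<lambda>\<omega>. erw_Mcal a X (Suc n) \<omega> $ r) \<omega> = erw_Mcal a X n \<omega> $ r"
    by (rule cond_exp_erw_Mcal_Suc)
qed

end

section \<open>A strong law for additive functionals of the walk\<close>

lemma abs_diff_le_if_unit_increments:
  fixes U :: "nat \<Rightarrow> real"
  assumes incr: "\<And>n. \<bar>U (Suc n) - U n\<bar> \<le> 1" and "m \<le> n"
  shows "\<bar>U n - U m\<bar> \<le> real (n - m)"
  using \<open>m \<le> n\<close>
proof (induction n rule: dec_induct)
  case (step n)
  then show ?case using incr[of n] by linarith
qed simp

lemma filterlim_floor_sqrt_at_top: "filterlim floor_sqrt at_top sequentially"
  unfolding filterlim_at_top
proof
  fix k :: nat
  show "eventually (\<lambda>n. k \<le> floor_sqrt n) sequentially"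
    using eventually_ge_at_top[of "k\<^sup>2"] by eventually_elim (metis floor_sqrt_inverse_power2 mono_floor_sqrt')
qed

lemma tendsto_div_zero_if_eventually_abs_less:
  fixes U D :: "nat \<Rightarrow> real"
  assumes U: "\<And>r. eventually (\<lambda>k. \<bar>U k\<bar> < D k / real (Suc r)) sequentially"
    and D: "eventually (\<lambda>k. D k > 0) sequentially"
  shows "(\<lambda>k. U k / D k) \<longlonglongrightarrow> 0"
proof (rule tendstoI)
  fix \<epsilon> :: real assume "\<epsilon> > 0"
  then obtain r where r: "inverse (real (Suc r)) < \<epsilon>"
    using reals_Archimedean by blast
  from U[of r] D show "eventually (\<lambda>k. dist (U k / D k) 0 < \<epsilon>) sequentially"
  proof eventually_elim
    case (elim k)
    then have "\<bar>U k / D k\<bar> < inverse (real (Suc r))"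
      by (simp add: abs_div divide_less_eq field_simps)
    then show ?case using r by simp
  qed
qed

text \<open>Squares are dense enough: between k^2 and (k+1)^2 a sequence with bounded increments
  moves by at most 2k, which is negligible against k^2.\<close>

lemma LIMSEQ_div_of_squares:
  fixes U :: "nat \<Rightarrow> real"
  assumes incr: "\<And>n. \<bar>U (Suc n) - U n\<bar> \<le> 1" and sq: "(\<lambda>k. U (k\<^sup>2) / real (k\<^sup>2)) \<longlonglongrightarrow> 0"
  shows "(\<lambda>n. U n / real n) \<longlonglongrightarrow> 0"
proof (rule Lim_null_comparison)
  let ?g = "\<lambda>k. \<bar>U (k\<^sup>2) / real (k\<^sup>2)\<bar> + 2 / real k"
  have "?g \<longlonglongrightarrow> 0"
    using tendsto_add[OF tendsto_rabs_zero[OF sq] tendsto_divide_0[OF tendsto_const filterlim_at_top_imp_at_infinity[OF filterlim_real_sequentially]]]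
    by simp
  then show "(\<lambda>n. ?g (floor_sqrt n)) \<longlonglongrightarrow> 0"
    by (rule filterlim_compose[OF _ filterlim_floor_sqrt_at_top])
  show "eventually (\<lambda>n. norm (U n / real n) \<le> ?g (floor_sqrt n)) sequentially"
    using eventually_ge_at_top[of 1]
  proof eventually_elim
    fix n :: nat assume "1 \<le> n"
    define k where "k = floor_sqrt n"
    have k: "k\<^sup>2 \<le> n" "n < (Suc k)\<^sup>2" "1 \<le> k"
      using \<open>1 \<le> n\<close> Suc_floor_sqrt_power2_gt[of n] by (auto simp: k_def Suc_le_eq)
    then have "n - k\<^sup>2 \<le> 2 * k" by (simp add: power2_eq_square)
    then have "\<bar>U n - U (k\<^sup>2)\<bar> \<le> 2 * real k"
      using abs_diff_le_if_unit_increments[of U, OF incr k(1)] by linarith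
    then have "\<bar>U n\<bar> \<le> \<bar>U (k\<^sup>2)\<bar> + 2 * real k" by linarith
    moreover have "real (k\<^sup>2) \<le> real n" "real (k\<^sup>2) > 0" using k by simp_all
    ultimately have "\<bar>U n\<bar> / real n \<le> (\<bar>U (k\<^sup>2)\<bar> + 2 * real k) / real (k\<^sup>2)"
      by (intro frac_le) auto
    also have "\<dots> = ?g k"
      using k by (simp add: abs_div add_divide_distrib power2_eq_square)
    finally show "norm (U n / real n) \<le> ?g (floor_sqrt n)"
      by (simp add: k_def abs_div)
  qed
qed

context elephant_walk
begin

context
  fixes u :: "'d \<times> bool \<Rightarrow> real"
  assumes sum_u: "(\<Sum>z\<in>UNIV. u z) = 0" and abs_u_le_1: "\<And>z. \<bar>u z\<bar> \<le> 1"
begin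

definition second_moment :: "nat \<Rightarrow> real" where
  "second_moment n = (\<Sum>x\<in>paths n. (path_sum u n x)\<^sup>2 * erw_path_prob p n x)"

lemma second_moment_nonneg: "second_moment n \<ge> 0"
  unfolding second_moment_def by (intro sum_nonneg mult_nonneg_nonneg erw_path_prob_nonneg) auto

lemma second_moment_Suc_le: "second_moment (Suc n) \<le> (1 + 2 * a / real n) * second_moment n + 1"
proof -
  have step: "(\<Sum>z\<in>UNIV. (path_sum u (Suc n) (y(Suc n := z)))\<^sup>2 * erw_kernel p n y z)
      \<le> (1 + 2 * a / real n) * (path_sum u n y)\<^sup>2 + 1" for y
  proof -
    let ?S = "path_sum u n y"
    have mean: "(\<Sum>z\<in>UNIV. erw_kernel p n y z * u z) = a / real n * ?S"
      unfolding a_eq path_sum_def by (rule sum_erw_kernel_centered[OF sum_u])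
    have "(\<Sum>z\<in>UNIV. erw_kernel p n y z * (u z)\<^sup>2) \<le> (\<Sum>z\<in>UNIV. erw_kernel p n y z * 1)"
      using abs_u_le_1 by (intro sum_mono mult_left_mono erw_kernel_nonneg p_nonneg p_le_1)
        (simp add: abs_square_le_1)
    then have var: "(\<Sum>z\<in>UNIV. erw_kernel p n y z * (u z)\<^sup>2) \<le> 1"
      by (simp add: sum_erw_kernel)
    have "(\<Sum>z\<in>UNIV. (path_sum u (Suc n) (y(Suc n := z)))\<^sup>2 * erw_kernel p n y z) =
        ?S\<^sup>2 * (\<Sum>z\<in>UNIV. erw_kernel p n y z) + 2 * ?S * (\<Sum>z\<in>UNIV. erw_kernel p n y z * u z)
        + (\<Sum>z\<in>UNIV. erw_kernel p n y z * (u z)\<^sup>2)"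
      by (simp add: path_sum_upd power2_sum algebra_simps sum.distrib sum_distrib_left sum_distrib_right)
    also have "\<dots> \<le> ?S\<^sup>2 + 2 * ?S * (a / real n * ?S) + 1"
      using var by (simp add: mean sum_erw_kernel)
    also have "\<dots> = (1 + 2 * a / real n) * ?S\<^sup>2 + 1"
      by (simp add: power2_eq_square algebra_simps)
    finally show ?thesis .
  qed
  have "second_moment (Suc n) =
      (\<Sum>y\<in>paths n. (\<Sum>z\<in>UNIV. (path_sum u (Suc n) (y(Suc n := z)))\<^sup>2 * erw_kernel p n y z) * erw_path_prob p n y)"
    unfolding second_moment_def by (rule sum_paths_Suc_erw_path_prob)
  also have "\<dots> \<le> (\<Sum>y\<in>paths n. ((1 + 2 * a / real n) * (path_sum u n y)\<^sup>2 + 1) * erw_path_prob p n y)"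
    by (intro sum_mono mult_right_mono step erw_path_prob_nonneg)
  also have "\<dots> = (1 + 2 * a / real n) * second_moment n + 1"
    unfolding second_moment_def
    by (simp add: sum_erw_path_prob algebra_simps sum.distrib sum_distrib_left)
  finally show ?thesis .
qed

text \<open>For a < 1/2 the drift factor 1 + 2a/n keeps the second moment linear in n.\<close>

lemma second_moment_le:
  assumes "a < 1/2"
  shows "second_moment n \<le> max 1 (1 / (1 - 2 * a)) * real n"
proof (induction n)
  case 0
  then show ?case by (simp add: second_moment_def paths_def path_sum_def)
next
  case (Suc n)
  define K where "K = max 1 (1 / (1 - 2 * a))"
  have K1: "K \<ge> 1" unfolding K_def by simp
  have "1 / (1 - 2 * a) * (1 - 2 * a) \<le> K * (1 - 2 * a)"
    unfolding K_def using assms by (intro mult_right_mono) auto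
  then have K2: "K * (1 - 2 * a) \<ge> 1" using assms by simp
  show ?case unfolding K_def[symmetric]
  proof (cases "1 + 2 * a / real n \<ge> 0")
    case True
    have "second_moment (Suc n) \<le> (1 + 2 * a / real n) * second_moment n + 1"
      by (rule second_moment_Suc_le)
    also have "\<dots> \<le> (1 + 2 * a / real n) * (K * real n) + 1"
      using Suc True unfolding K_def by (intro add_right_mono mult_left_mono) auto
    also have "\<dots> \<le> K * real (Suc n)"
    proof (cases "n = 0")
      case False
      then have "(1 + 2 * a / real n) * (K * real n) = K * real n + 2 * a * K"
        by (simp add: field_simps)
      then show ?thesis using K2 by (simp add: algebra_simps)
    qed (use K1 in simp)
    finally show "second_moment (Suc n) \<le> K * real (Suc n)" .
  next
    case False
    have "second_moment (Suc n) \<le> (1 + 2 * a / real n) * second_moment n + 1"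
      by (rule second_moment_Suc_le)
    also have "\<dots> \<le> 1"
      using False second_moment_nonneg[of n] by (simp add: mult_nonpos_nonneg)
    also have "\<dots> \<le> K * real (Suc n)"
      using K1 mult_mono[of 1 K 1 "real (Suc n)"] by simp
    finally show "second_moment (Suc n) \<le> K * real (Suc n)" .
  qed
qed

lemma prob_abs_path_sum_ge:
  assumes "c > 0"
  shows "measure M {\<omega>\<in>space M. c \<le> \<bar>path_sum u n (history X n \<omega>)\<bar>} \<le> second_moment n / c\<^sup>2"
proof -
  let ?S = "\<lambda>\<omega>. path_sum u n (history X n \<omega>)"
  have "c \<le> \<bar>s\<bar> \<longleftrightarrow> c\<^sup>2 \<le> s\<^sup>2" for s
    using abs_le_square_iff[of c s] assms by simp
  then have "measure M {\<omega>\<in>space M. c \<le> \<bar>?S \<omega>\<bar>} = measure M {\<omega>\<in>space M. c\<^sup>2 \<le> (?S \<omega>)\<^sup>2}"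
    by simp
  also have "\<dots> \<le> (\<integral>\<omega>. (?S \<omega>)\<^sup>2 \<partial>M) / c\<^sup>2"
    using assms by (intro integral_Markov_inequality_measure[OF integrable_history sets.top]) auto
  also have "\<dots> = second_moment n / c\<^sup>2"
    by (simp add: integral_history[of "\<lambda>x. (path_sum u n x)\<^sup>2"] second_moment_def)
  finally show ?thesis .
qed

text \<open>Chebyshev and Borel--Cantelli along the squares, where the bounds are summable.\<close>

lemma AE_eventually_abs_path_sum_squares_less:
  assumes "a < 1/2"
  shows "AE \<omega> in M. eventually (\<lambda>k. \<bar>path_sum u (k\<^sup>2) (\<lambda>i. X i \<omega>)\<bar> < real (k\<^sup>2) / real (Suc r)) sequentially"
proof -
  define K where "K = max 1 (1 / (1 - 2 * a))"
  define A where "A k = {\<omega>\<in>space M. real (k\<^sup>2) / real (Suc r) \<le> \<bar>path_sum u (k\<^sup>2) (history X (k\<^sup>2) \<omega>)\<bar>}" for k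
  have A_sets: "A k \<in> sets M" for k
    unfolding A_def by (rule sets_history_pred)
  have A_le: "measure M (A k) \<le> K * (real (Suc r))\<^sup>2 * inverse (real k ^ 2)" if "k \<ge> 1" for k
  proof -
    have k: "real k > 0" using that by simp
    have "measure M (A k) \<le> second_moment (k\<^sup>2) / (real (k\<^sup>2) / real (Suc r))\<^sup>2"
      unfolding A_def by (rule prob_abs_path_sum_ge) (use k in simp)
    also have "\<dots> \<le> K * real (k\<^sup>2) / (real (k\<^sup>2) / real (Suc r))\<^sup>2"
      using second_moment_le[OF assms, of "k\<^sup>2"] unfolding K_def by (intro divide_right_mono) auto
    also have "\<dots> = K * (real (Suc r))\<^sup>2 * inverse (real k ^ 2)"
      using k by (simp add: field_simps power2_eq_square)
    finally show ?thesis .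
  qed
  have "summable (\<lambda>k. measure M (A k))"
  proof (rule summable_comparison_test'[where N=1])
    show "summable (\<lambda>k. K * (real (Suc r))\<^sup>2 * inverse (real k ^ 2))"
      by (intro summable_mult inverse_power_summable) simp
  qed (use A_le in simp)
  then have "AE \<omega> in M. eventually (\<lambda>k. \<omega> \<in> space M - A k) sequentially"
    by (intro borel_cantelli_AE1[OF A_sets]) (simp_all add: emeasure_eq_measure)
  then show ?thesis
    by (rule AE_mp) (auto intro!: AE_I2 elim!: eventually_mono simp: A_def path_sum_history)
qed

lemma strong_law_path_sum:
  assumes "a < 1/2"
  shows "AE \<omega> in M. (\<lambda>n. path_sum u n (\<lambda>i. X i \<omega>) / real n) \<longlonglongrightarrow> 0"
proof -
  have "AE \<omega> in M. \<forall>r. eventually (\<lambda>k. \<bar>path_sum u (k\<^sup>2) (\<lambda>i. X i \<omega>)\<bar> < real (k\<^sup>2) / real (Suc r)) sequentially"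
    using AE_eventually_abs_path_sum_squares_less[OF assms] by (simp add: AE_all_countable)
  then show ?thesis
  proof (rule AE_mp, intro AE_I2 impI LIMSEQ_div_of_squares tendsto_div_zero_if_eventually_abs_less)
    show "eventually (\<lambda>k. real (k\<^sup>2) > 0) sequentially"
      using eventually_ge_at_top[of 1] by eventually_elim simp
  qed (use abs_u_le_1 in \<open>simp_all add: path_sum_Suc\<close>)
qed

end

end

section \<open>The conditional covariance of the innovations\<close>

definition centred_axis_indicator :: "'d::finite \<Rightarrow> 'd \<times> bool \<Rightarrow> real" where
  "centred_axis_indicator j z = (if fst z = j then 1 else 0) - 1 / real CARD('d)"

lemma sum_centred_axis_indicator: "(\<Sum>z\<in>UNIV. centred_axis_indicator (j :: 'd::finite) z) = 0"
proof -
  have "(\<Sum>z\<in>UNIV. centred_axis_indicator j z) = (\<Sum>i\<in>UNIV. (if i = j then 2 else 0) - 2 / real CARD('d))"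
    by (subst sum_UNIV_times_bool) (intro sum.cong, auto simp: centred_axis_indicator_def)
  also have "\<dots> = 2 - real CARD('d) * (2 / real CARD('d))"
    by (simp add: sum_subtractf)
  also have "\<dots> = 0" by simp
  finally show ?thesis .
qed

lemma abs_centred_axis_indicator_le_1: "\<bar>centred_axis_indicator j z\<bar> \<le> 1"
proof -
  have "1 / real CARD('a) \<le> 1"
    using card_ge_1[where 'd='a] by simp
  then show ?thesis unfolding centred_axis_indicator_def by auto
qed

lemma dirvec_mult_dirvec:
  "dirvec z $ j * dirvec z $ j' = (if j = j' then centred_axis_indicator j z + 1 / real CARD('d) else 0)"
  for j :: "'d::finite"
  unfolding dirvec_def centred_axis_indicator_def by auto

definition cond_cov :: "real \<Rightarrow> real \<Rightarrow> nat \<Rightarrow> (nat \<Rightarrow> 'd::finite \<times> bool) \<Rightarrow> 'd \<Rightarrow> 'd \<Rightarrow> real" where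
  "cond_cov p a n y j j' = (\<Sum>z\<in>UNIV. erw_kernel p n y z * (path_eps a n y z j * path_eps a n y z j'))"

context elephant_walk
begin

lemma cond_cov_eq:
  "cond_cov p a n y j j' =
     (if j = j' then 1 / real CARD('d) + a / real n * path_sum (centred_axis_indicator j) n y else 0)
     - (a / real n)\<^sup>2 * (path_sum (\<lambda>z. dirvec z $ j) n y * path_sum (\<lambda>z. dirvec z $ j') n y)"
  for y :: "nat \<Rightarrow> 'd \<times> bool"
proof -
  define m where "m j = a / real n * path_sum (\<lambda>z. dirvec z $ j) n y" for j
  have mean: "(\<Sum>z\<in>UNIV. erw_kernel p n y z * dirvec z $ j) = m j" for j
    unfolding m_def a_eq path_sum_def by (rule sum_erw_kernel_centered[OF sum_dirvec])
  have second: "(\<Sum>z\<in>UNIV. erw_kernel p n y z * (dirvec z $ j * dirvec z $ j')) =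
      (if j = j' then 1 / real CARD('d) + a / real n * path_sum (centred_axis_indicator j) n y else 0)"
  proof (cases "j = j'")
    case True
    have "(\<Sum>z\<in>UNIV. erw_kernel p n y z * (dirvec z $ j * dirvec z $ j')) =
        (\<Sum>z\<in>UNIV. erw_kernel p n y z * centred_axis_indicator j z) + 1 / real CARD('d) * (\<Sum>z\<in>UNIV. erw_kernel p n y z)"
      using True by (simp add: dirvec_mult_dirvec algebra_simps sum.distrib sum_distrib_left)
    then show ?thesis
      using True by (simp add: a_eq path_sum_def sum_erw_kernel_centered[OF sum_centred_axis_indicator] sum_erw_kernel)
  qed (simp add: dirvec_mult_dirvec)
  have "cond_cov p a n y j j' = (\<Sum>z\<in>UNIV. erw_kernel p n y z * (dirvec z $ j * dirvec z $ j'))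
      - m j' * (\<Sum>z\<in>UNIV. erw_kernel p n y z * dirvec z $ j)
      - m j * (\<Sum>z\<in>UNIV. erw_kernel p n y z * dirvec z $ j')
      + m j * m j' * (\<Sum>z\<in>UNIV. erw_kernel p n y z)"
    unfolding cond_cov_def path_eps_def m_def[symmetric]
    by (simp add: algebra_simps sum.distrib sum_subtractf sum_distrib_left)
  then show ?thesis
    by (simp add: mean second sum_erw_kernel m_def power2_eq_square)
qed

lemma cond_exp_erw_Mcal_increments:
  "AE \<omega> in M. \<forall>n r c. real_cond_exp M (F n)
      (\<lambda>\<omega>'. (erw_Mcal a X (Suc n) \<omega>' - erw_Mcal a X n \<omega>') $ r * (erw_Mcal a X (Suc n) \<omega>' - erw_Mcal a X n \<omega>') $ c) \<omega>
    = mcal_coef a (fst r) (Suc n) * mcal_coef a (fst c) (Suc n) * cond_cov p a n (history X n \<omega>) (snd r) (snd c)"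
proof -
  have "AE \<omega> in M. real_cond_exp M (F n)
      (\<lambda>\<omega>'. (erw_Mcal a X (Suc n) \<omega>' - erw_Mcal a X n \<omega>') $ r * (erw_Mcal a X (Suc n) \<omega>' - erw_Mcal a X n \<omega>') $ c) \<omega>
    = mcal_coef a (fst r) (Suc n) * mcal_coef a (fst c) (Suc n) * cond_cov p a n (history X n \<omega>) (snd r) (snd c)"
    for n r c
  proof -
    define h where "h x = (path_Mcal a (Suc n) x - path_Mcal a n x) $ r * (path_Mcal a (Suc n) x - path_Mcal a n x) $ c" for x
    have "(erw_Mcal a X (Suc n) \<omega> - erw_Mcal a X n \<omega>) $ r * (erw_Mcal a X (Suc n) \<omega> - erw_Mcal a X n \<omega>) $ c
        = h (history X (Suc n) \<omega>)" for \<omega>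
      unfolding h_def by (simp add: erw_Mcal_history[of n "Suc n"] erw_Mcal_history[of "Suc n" "Suc n"])
    moreover have "(\<Sum>z\<in>UNIV. h (y(Suc n := z)) * erw_kernel p n y z) =
        mcal_coef a (fst r) (Suc n) * mcal_coef a (fst c) (Suc n) * cond_cov p a n y (snd r) (snd c)" for y
      unfolding h_def cond_cov_def
      by (simp add: path_Mcal_upd path_Mcal_upd_same sum_distrib_left algebra_simps)
    ultimately show ?thesis
      using cond_exp_history_Suc[of n h] by simp
  qed
  then show ?thesis
    unfolding AE_all_countable by blast
qed

lemma AE_cond_cov_tendsto:
  assumes "a < 1/2"
  shows "AE \<omega> in M. \<forall>j j'. (\<lambda>n. cond_cov p a n (history X n \<omega>) j j') \<longlonglongrightarrow> (if j = j' then 1 / real CARD('d) else 0)"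
proof -
  have "AE \<omega> in M. \<forall>j. (\<lambda>n. path_sum (\<lambda>z. dirvec z $ j) n (\<lambda>i. X i \<omega>) / real n) \<longlonglongrightarrow> 0
      \<and> (\<lambda>n. path_sum (centred_axis_indicator j) n (\<lambda>i. X i \<omega>) / real n) \<longlonglongrightarrow> 0"
    using strong_law_path_sum[OF sum_dirvec abs_dirvec_le_1 assms]
      strong_law_path_sum[OF sum_centred_axis_indicator abs_centred_axis_indicator_le_1 assms]
    by (simp add: AE_all_countable AE_conj_iff)
  then show ?thesis
  proof eventually_elim
    case (elim \<omega>)
    show ?case
    proof (intro allI)
      fix j j'
      let ?S = "\<lambda>j n. path_sum (\<lambda>z. dirvec z $ j) n (\<lambda>i. X i \<omega>) / real n"
      let ?D = "\<lambda>n. path_sum (centred_axis_indicator j) n (\<lambda>i. X i \<omega>) / real n"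
      have D: "?D \<longlonglongrightarrow> 0" and S: "?S j \<longlonglongrightarrow> 0" "?S j' \<longlonglongrightarrow> 0"
        using elim by blast+
      have "(\<lambda>n. if j = j' then 1 / real CARD('d) + a * ?D n else 0) \<longlonglongrightarrow> (if j = j' then 1 / real CARD('d) else 0)"
      proof (cases "j = j'")
        case True
        show ?thesis
          unfolding if_P[OF True] using tendsto_add[OF tendsto_const tendsto_mult_right_zero[OF D]] by simp
      qed simp
      from tendsto_diff[OF this tendsto_mult_right_zero[OF tendsto_mult_zero[OF S]]]
      have "(\<lambda>n. (if j = j' then 1 / real CARD('d) + a * ?D n else 0) - a\<^sup>2 * (?S j n * ?S j' n))
          \<longlonglongrightarrow> (if j = j' then 1 / real CARD('d) else 0)"
        by simp
      moreover have "cond_cov p a n (history X n \<omega>) j j' =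
          (if j = j' then 1 / real CARD('d) + a * ?D n else 0) - a\<^sup>2 * (?S j n * ?S j' n)" for n
        unfolding cond_cov_eq path_sum_history by (simp add: power2_eq_square)
      ultimately show "(\<lambda>n. cond_cov p a n (history X n \<omega>) j j') \<longlonglongrightarrow> (if j = j' then 1 / real CARD('d) else 0)"
        by simp
    qed
  qed
qed

end

section \<open>Weighted Cesaro means\<close>

lemma weighted_cesaro_null:
  fixes t y :: "nat \<Rightarrow> real"
  assumes t: "\<And>k. t k \<ge> 0" and T: "filterlim (\<lambda>n. \<Sum>k=1..n. t k) at_top sequentially"
    and y: "y \<longlonglongrightarrow> 0"
  shows "(\<lambda>n. (\<Sum>k=1..n. t k * y k) / (\<Sum>k=1..n. t k)) \<longlonglongrightarrow> 0"
proof (rule tendstoI)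
  fix \<epsilon> :: real assume "\<epsilon> > 0"
  then obtain N where N: "\<And>k. k \<ge> N \<Longrightarrow> \<bar>y k\<bar> < \<epsilon> / 2"
    using tendstoD[OF y, of "\<epsilon> / 2"] unfolding eventually_sequentially by auto
  define C where "C = (\<Sum>k=1..N. t k * \<bar>y k\<bar>)"
  have bound: "\<bar>\<Sum>k=1..n. t k * y k\<bar> \<le> C + \<epsilon> / 2 * (\<Sum>k=1..n. t k)" for n
  proof -
    have "\<bar>\<Sum>k=1..n. t k * y k\<bar> \<le> (\<Sum>k=1..n. t k * \<bar>y k\<bar>)"
      using t by (simp add: sum_abs[THEN order_trans] abs_mult)
    also have "\<dots> \<le> (\<Sum>k=1..n. (if k \<le> N then t k * \<bar>y k\<bar> else 0) + t k * (\<epsilon> / 2))"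
    proof (intro sum_mono)
      fix k
      have "t k * \<bar>y k\<bar> \<le> t k * (\<epsilon> / 2)" if "\<not> k \<le> N"
        using N[of k] that t[of k] by (intro mult_left_mono) auto
      then show "t k * \<bar>y k\<bar> \<le> (if k \<le> N then t k * \<bar>y k\<bar> else 0) + t k * (\<epsilon> / 2)"
        using t[of k] \<open>\<epsilon> > 0\<close> by auto
    qed
    also have "\<dots> = (\<Sum>k\<in>{k\<in>{1..n}. k \<le> N}. t k * \<bar>y k\<bar>) + \<epsilon> / 2 * (\<Sum>k=1..n. t k)"
      by (simp add: sum.distrib sum_distrib_left mult.commute sum.inter_filter[symmetric])
    also have "(\<Sum>k\<in>{k\<in>{1..n}. k \<le> N}. t k * \<bar>y k\<bar>) \<le> C"
      unfolding C_def using t by (intro sum_mono2) auto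
    finally show ?thesis by simp
  qed
  have "eventually (\<lambda>n. C / (\<Sum>k=1..n. t k) < \<epsilon> / 2 \<and> (\<Sum>k=1..n. t k) > 0) sequentially"
    using order_tendstoD(2)[OF tendsto_divide_0[OF tendsto_const filterlim_at_top_imp_at_infinity[OF T]], of "\<epsilon> / 2" C]
      T \<open>\<epsilon> > 0\<close> by (auto simp: filterlim_at_top_dense eventually_conj_iff)
  then show "eventually (\<lambda>n. dist ((\<Sum>k=1..n. t k * y k) / (\<Sum>k=1..n. t k)) 0 < \<epsilon>) sequentially"
  proof eventually_elim
    case (elim n)
    let ?T = "\<Sum>k=1..n. t k"
    have "\<bar>(\<Sum>k=1..n. t k * y k) / ?T\<bar> = \<bar>\<Sum>k=1..n. t k * y k\<bar> / ?T"
      using elim by (simp add: abs_div)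
    also have "\<dots> \<le> (C + \<epsilon> / 2 * ?T) / ?T"
      using bound[of n] elim by (intro divide_right_mono) auto
    also have "\<dots> = C / ?T + \<epsilon> / 2"
      using elim by (simp add: add_divide_distrib)
    finally have "\<bar>(\<Sum>k=1..n. t k * y k) / ?T\<bar> \<le> C / ?T + \<epsilon> / 2" .
    moreover have "C / ?T < \<epsilon> / 2" using elim by blast
    ultimately show ?case unfolding dist_real_def diff_zero by linarith
  qed
qed

lemma weighted_cesaro:
  fixes t x :: "nat \<Rightarrow> real"
  assumes t: "\<And>k. t k \<ge> 0" and T: "filterlim (\<lambda>n. \<Sum>k=1..n. t k) at_top sequentially"
    and x: "x \<longlonglongrightarrow> L"
  shows "(\<lambda>n. (\<Sum>k=1..n. t k * x k) / (\<Sum>k=1..n. t k)) \<longlonglongrightarrow> L"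
proof -
  have "(\<lambda>n. L + (\<Sum>k=1..n. t k * (x k - L)) / (\<Sum>k=1..n. t k)) \<longlonglongrightarrow> L + 0"
    by (intro tendsto_add tendsto_const weighted_cesaro_null[OF t T] LIM_zero[OF x])
  moreover have "eventually (\<lambda>n. L + (\<Sum>k=1..n. t k * (x k - L)) / (\<Sum>k=1..n. t k) =
      (\<Sum>k=1..n. t k * x k) / (\<Sum>k=1..n. t k)) sequentially"
    using T unfolding filterlim_at_top_dense
    by (rule eventually_mono[OF spec[of _ 0]])
       (simp add: field_simps sum_subtractf sum_distrib_left sum_distrib_right)
  ultimately show ?thesis by (simp add: tendsto_cong)
qed

text \<open>A Stolz--Cesaro type statement: the weights t k need not be the increments of the
  denominator B, only proportional to them asymptotically.\<close>

lemma tendsto_weighted_ratio: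
  fixes t x \<rho> B E :: "nat \<Rightarrow> real"
  assumes t: "\<And>k. t k \<ge> 0" and T: "filterlim (\<lambda>n. \<Sum>k=1..n. t k) at_top sequentially"
    and x: "x \<longlonglongrightarrow> L" and \<rho>: "\<rho> \<longlonglongrightarrow> R" and "R \<noteq> 0"
    and B: "\<And>k. k \<ge> 2 \<Longrightarrow> B k - B (k - 1) = t k * \<rho> k"
    and E: "\<And>n. n \<ge> 1 \<Longrightarrow> E n = \<kappa> * ((\<Sum>k=1..n. t k * x k) / B n)"
  shows "E \<longlonglongrightarrow> \<kappa> * (L / R)"
proof -
  let ?T = "\<lambda>n. \<Sum>k=1..n. t k"
  define \<beta> where "\<beta> = B 1 - t 1 * \<rho> 1"
  have B_eq: "B n = \<beta> + (\<Sum>k=1..n. t k * \<rho> k)" if "n \<ge> 1" for n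
    using that
  proof (induction n rule: dec_induct)
    case (step n)
    then show ?case using B[of "Suc n"] by simp
  qed (simp add: \<beta>_def)
  have "(\<lambda>n. \<kappa> * (((\<Sum>k=1..n. t k * x k) / ?T n) / (\<beta> / ?T n + (\<Sum>k=1..n. t k * \<rho> k) / ?T n)))
      \<longlonglongrightarrow> \<kappa> * (L / (0 + R))"
    using \<open>R \<noteq> 0\<close>
    by (intro tendsto_intros weighted_cesaro[OF t T x] weighted_cesaro[OF t T \<rho>]
        tendsto_divide_0[OF tendsto_const filterlim_at_top_imp_at_infinity[OF T]]) auto
  moreover have "eventually (\<lambda>n. ?T n > 0 \<and> n \<ge> 1) sequentially"
    using T by (simp add: filterlim_at_top_dense eventually_conj_iff eventually_ge_at_top)
  then have "eventually (\<lambda>n. \<kappa> * (((\<Sum>k=1..n. t k * x k) / ?T n) / (\<beta> / ?T n + (\<Sum>k=1..n. t k * \<rho> k) / ?T n))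
      = E n) sequentially"
    by eventually_elim (simp add: E B_eq add_divide_distrib[symmetric])
  ultimately show ?thesis by (simp add: tendsto_cong)
qed

lemma filterlim_sum_at_top_if_ge_harmonic:
  fixes t :: "nat \<Rightarrow> real"
  assumes t: "\<And>k. t k \<ge> 0" and "\<gamma> > 0" and lb: "\<And>k. k \<ge> K \<Longrightarrow> t k \<ge> \<gamma> / real k"
  shows "filterlim (\<lambda>n. \<Sum>k=1..n. t k) at_top sequentially"
proof (rule filterlim_at_top_mono)
  show "filterlim (\<lambda>n. \<gamma> * (harm n - harm K)) at_top sequentially"
    by (intro filterlim_tendsto_pos_mult_at_top[OF tendsto_const \<open>\<gamma> > 0\<close>]
        filterlim_tendsto_add_at_top[OF tendsto_const harm_at_top, where c="- harm K", simplified])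
  show "eventually (\<lambda>n. \<gamma> * (harm n - harm K) \<le> (\<Sum>k=1..n. t k)) sequentially"
    using eventually_ge_at_top[of K]
  proof eventually_elim
    case (elim n)
    have "harm n = harm K + (\<Sum>k\<in>{K<..n}. inverse (real k))"
      using elim
    proof (induction n rule: dec_induct)
      case (step m)
      then have "{K<..Suc m} = insert (Suc m) {K<..m}" by auto
      then show ?case using step.IH by (simp add: harm_Suc)
    qed simp
    then have "\<gamma> * (harm n - harm K) = (\<Sum>k\<in>{K<..n}. \<gamma> / real k)"
      by (simp add: sum_distrib_left divide_inverse)
    also have "\<dots> \<le> (\<Sum>k\<in>{K<..n}. t k)"
      using lb by (intro sum_mono) auto
    also have "\<dots> \<le> (\<Sum>k=1..n. t k)"
      using t by (intro sum_mono2) auto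
    finally show ?case .
  qed
qed

section \<open>The coefficients a_n and b_n\<close>

lemma acoef_Suc: "k \<ge> 1 \<Longrightarrow> acoef a (Suc k) = acoef a k * (real k / (real k + a))"
  unfolding acoef_def by simp

lemma acoef_pos: "a > -1 \<Longrightarrow> acoef a k > 0"
  unfolding acoef_def by (intro prod_pos) (auto intro!: divide_pos_pos)

lemma bcoef_eq_acoef:
  assumes "a > -1"
  shows "bcoef a n = real n / ((1 + a) * acoef a (Suc n))"
proof (induction n)
  case 0
  then show ?case by (simp add: bcoef_def)
next
  case (Suc n)
  have A: "acoef a (Suc n) > 0" using acoef_pos[OF assms] .
  have "bcoef a (Suc n) = real n / ((1 + a) * acoef a (Suc n)) + 1 / acoef a (Suc n)"
    using Suc by (simp add: bcoef_def)
  also have "\<dots> = (real n + (1 + a)) / ((1 + a) * acoef a (Suc n))"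
  proof -
    have "(1 + a) / ((1 + a) * acoef a (Suc n)) = 1 / acoef a (Suc n)" using assms by simp
    then show ?thesis by (simp only: add_divide_distrib)
  qed
  also have "\<dots> = real (Suc n) / ((1 + a) * acoef a (Suc (Suc n)))"
  proof -
    have "m / (c * (B * (m / (m + a)))) = (m + a) / (c * B)" if "m > 0" "m + a > 0" "B > 0" "c > 0" for m B c
      using that by (simp add: field_simps)
    from this[of "real (Suc n)" "acoef a (Suc n)" "1 + a"] show ?thesis
      using A assms by (simp add: acoef_Suc[of "Suc n"] add_ac)
  qed
  finally show ?case .
qed

lemma mcal_coef_1: "mcal_coef a 1 k = acoef a k"
  unfolding mcal_coef_def by simp

lemma mcal_coef_2:
  assumes "a > -1" and "k \<ge> 1"
  shows "mcal_coef a 2 k = real (k - 1) / (1 + a)"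
  using bcoef_eq_acoef[OF assms(1), of "k - 1"] acoef_pos[OF assms(1), of k] assms(2)
  unfolding mcal_coef_def by simp

text \<open>(k+1) a_(k+1)^2 / (k a_k^2) = k(k+1)/(k+a)^2 \<ge> 1 as soon as k(1-2a) \<ge> 1.\<close>

lemma acoef_sq_lower_bound:
  assumes a1: "a > -1" and a2: "a < 1/2"
  obtains c K where "c > 0" "K \<ge> 1" "\<And>k. k \<ge> K \<Longrightarrow> real k * (acoef a k)\<^sup>2 \<ge> c"
proof -
  define K where "K = nat \<lceil>1 / (1 - 2 * a)\<rceil> + 1"
  have K1: "K \<ge> 1" and KK: "real K \<ge> 1 / (1 - 2 * a)" unfolding K_def by linarith+
  have increasing: "real k * (acoef a k)\<^sup>2 \<le> real (Suc k) * (acoef a (Suc k))\<^sup>2" if "k \<ge> K" for k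
  proof -
    have k: "k \<ge> 1" "real k + a > 0" using that K1 a1 by auto
    have "1 / (1 - 2 * a) \<le> real k" using that KK by (meson of_nat_le_iff order_trans)
    then have "real k * (1 - 2 * a) \<ge> 1" using a2 by (simp add: divide_le_eq)
    moreover have "a\<^sup>2 < 1" using a1 a2 by (simp add: abs_square_less_1)
    ultimately have "(real k + a)\<^sup>2 \<le> real k * (real k + 1)"
      by (simp add: power2_eq_square algebra_simps)
    then have "1 \<le> real k * (real k + 1) / (real k + a)\<^sup>2"
      using k by (simp add: le_divide_eq)
    then have "real k * (acoef a k)\<^sup>2 * 1 \<le> real k * (acoef a k)\<^sup>2 * (real k * (real k + 1) / (real k + a)\<^sup>2)"
      by (intro mult_left_mono) auto
    also have "\<dots> = real (Suc k) * (acoef a (Suc k))\<^sup>2"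
      using k by (simp add: acoef_Suc power2_eq_square field_simps)
    finally show ?thesis by simp
  qed
  have "real K * (acoef a K)\<^sup>2 \<le> real k * (acoef a k)\<^sup>2" if "k \<ge> K" for k
    using that
  proof (induction k rule: dec_induct)
    case (step k)
    then show ?case using increasing[of k] by linarith
  qed simp
  moreover have "real K * (acoef a K)\<^sup>2 > 0" using K1 acoef_pos[OF a1, of K] by simp
  ultimately show thesis using that K1 by blast
qed

section \<open>The normalised quadratic variation\<close>

definition Vn_weight :: "real \<Rightarrow> 2 \<Rightarrow> nat \<Rightarrow> real" where
  "Vn_weight a r n = (if r = 1 then bcoef a n else 1)"

definition V_block :: "real \<Rightarrow> 2 \<Rightarrow> 2 \<Rightarrow> real" where
  "V_block a r c = 1 / (a + 1)\<^sup>2 *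
     (if r = 1 \<and> c = 1 then 1 / (1 - 2 * a) else if r = 1 \<or> c = 1 then 1 / (2 - a) else 1 / 3)"

text \<open>Entry ((r, j), (c, j')) of V_n <M>_n V_n^T, where x k stands for the conditional covariance
  of the j-th and j'-th coordinates of the k-th innovation.\<close>

definition scaled_qv_entry :: "real \<Rightarrow> (nat \<Rightarrow> real) \<Rightarrow> 2 \<Rightarrow> 2 \<Rightarrow> nat \<Rightarrow> real" where
  "scaled_qv_entry a x r c n =
     Vn_weight a r n * Vn_weight a c n / real n ^ 3 * (\<Sum>k=1..n. mcal_coef a r k * mcal_coef a c k * x k)"

context
  fixes a :: real
  assumes a_gt: "a > -1" and a_lt: "a < 1/2"
begin

lemma acoef_ge_inverse:
  obtains c K where "c > 0" "\<And>k. k \<ge> K \<Longrightarrow> acoef a k \<ge> c / real k"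
proof -
  obtain c K where c: "c > 0" "K \<ge> 1" and cK: "\<And>k. k \<ge> K \<Longrightarrow> real k * (acoef a k)\<^sup>2 \<ge> c"
    using acoef_sq_lower_bound[OF a_gt a_lt] by blast
  have "acoef a k \<ge> min 1 c / real k" if k: "k \<ge> K" for k
  proof (cases "acoef a k \<ge> 1")
    case True
    have "min 1 c / real k \<le> 1" using k c by (simp add: divide_le_eq)
    then show ?thesis using True by linarith
  next
    case False
    have "c / real k \<le> (acoef a k)\<^sup>2" using cK[OF k] k c by (simp add: divide_le_eq mult.commute)
    also have "\<dots> \<le> acoef a k"
      using False acoef_pos[OF a_gt, of k] by (simp add: power2_eq_square mult_le_cancel_right1)
    finally show ?thesis using k c by (smt (verit) divide_right_mono of_nat_0_le_iff)
  qed
  then show thesis using that[of "min 1 c" K] c by simp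
qed

lemma scaled_qv_entry_11_tendsto:
  assumes x: "x \<longlonglongrightarrow> L"
  shows "scaled_qv_entry a x 1 1 \<longlonglongrightarrow> L * V_block a 1 1"
proof -
  obtain c K where c: "c > 0" and cK: "\<And>k. k \<ge> K \<Longrightarrow> real k * (acoef a k)\<^sup>2 \<ge> c"
    using acoef_sq_lower_bound[OF a_gt a_lt] by blast
  have "scaled_qv_entry a x 1 1 \<longlonglongrightarrow> 1 / (1 + a)\<^sup>2 * (L / (1 - 2 * a))"
  proof (rule tendsto_weighted_ratio[where t="\<lambda>k. (acoef a k)\<^sup>2" and B="\<lambda>n. real n * (acoef a (Suc n))\<^sup>2"
        and \<rho>="\<lambda>k. real k * (real k / (real k + a))\<^sup>2 - (real k - 1)"])
    show "filterlim (\<lambda>n. \<Sum>k=1..n. (acoef a k)\<^sup>2) at_top sequentially"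
    proof (rule filterlim_sum_at_top_if_ge_harmonic[OF _ c])
      show "c / real k \<le> (acoef a k)\<^sup>2" if "k \<ge> max K 1" for k
        using cK[of k] that by (simp add: divide_le_eq mult.commute)
    qed simp
    show "(\<lambda>k. real k * (real k / (real k + a))\<^sup>2 - (real k - 1)) \<longlonglongrightarrow> 1 - 2 * a"
      by real_asymp
    show "real k * (acoef a (Suc k))\<^sup>2 - real (k - 1) * (acoef a (Suc (k - 1)))\<^sup>2 =
        (acoef a k)\<^sup>2 * (real k * (real k / (real k + a))\<^sup>2 - (real k - 1))" if "k \<ge> 2" for k
      using that by (simp add: acoef_Suc of_nat_diff power_mult_distrib power_divide algebra_simps)
    show "scaled_qv_entry a x 1 1 n =
        1 / (1 + a)\<^sup>2 * ((\<Sum>k=1..n. (acoef a k)\<^sup>2 * x k) / (real n * (acoef a (Suc n))\<^sup>2))" if "n \<ge> 1" for n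
    proof -
      have "m / (b * A) * (m / (b * A)) / m ^ 3 * S = 1 / b\<^sup>2 * (S / (m * A\<^sup>2))"
        if "m > 0" "b > 0" "A > 0" for m b A S :: real
        using that by (simp add: field_simps power2_eq_square power3_eq_cube)
      from this[of "real n" "1 + a" "acoef a (Suc n)" "\<Sum>k=1..n. (acoef a k)\<^sup>2 * x k"] show ?thesis
        using \<open>n \<ge> 1\<close> a_gt acoef_pos[OF a_gt]
        unfolding scaled_qv_entry_def Vn_weight_def bcoef_eq_acoef[OF a_gt] mcal_coef_1
        by (simp add: power2_eq_square)
    qed
  qed (use a_lt x in auto)
  then show ?thesis unfolding V_block_def by (simp add: add.commute)
qed

lemma scaled_qv_entry_12_tendsto:
  assumes x: "x \<longlonglongrightarrow> L"
  shows "scaled_qv_entry a x 1 2 \<longlonglongrightarrow> L * V_block a 1 2"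
proof -
  obtain c K where c: "c > 0" and cK: "\<And>k. k \<ge> K \<Longrightarrow> acoef a k \<ge> c / real k"
    using acoef_ge_inverse by blast
  have "scaled_qv_entry a x 1 2 \<longlonglongrightarrow> 1 / (1 + a)\<^sup>2 * (L / (2 - a))"
  proof (rule tendsto_weighted_ratio[where t="\<lambda>k. real (k - 1) * acoef a k" and B="\<lambda>n. (real n)\<^sup>2 * acoef a (Suc n)"
        and \<rho>="\<lambda>k. (real k ^ 3 / (real k + a) - (real k - 1)\<^sup>2) / (real k - 1)"])
    show t_nonneg: "real (k - 1) * acoef a k \<ge> 0" for k
      using acoef_pos[OF a_gt, of k] by simp
    show "filterlim (\<lambda>n. \<Sum>k=1..n. real (k - 1) * acoef a k) at_top sequentially"
    proof (rule filterlim_sum_at_top_if_ge_harmonic[OF _ c])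
      show "c / real k \<le> real (k - 1) * acoef a k" if "k \<ge> max K 2" for k
        using cK[of k] that acoef_pos[OF a_gt, of k]
        by (intro order_trans[OF _ mult_le_cancel_right1[THEN iffD2]]) auto
    qed (rule t_nonneg)
    show "(\<lambda>k. (real k ^ 3 / (real k + a) - (real k - 1)\<^sup>2) / (real k - 1)) \<longlonglongrightarrow> 2 - a"
      by real_asymp
    show "(real k)\<^sup>2 * acoef a (Suc k) - (real (k - 1))\<^sup>2 * acoef a (Suc (k - 1)) =
        real (k - 1) * acoef a k * ((real k ^ 3 / (real k + a) - (real k - 1)\<^sup>2) / (real k - 1))" if "k \<ge> 2" for k
    proof -
      have "real k - 1 \<noteq> 0" using that by simp
      then have "real (k - 1) * acoef a k * ((real k ^ 3 / (real k + a) - (real k - 1)\<^sup>2) / (real k - 1)) =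
          acoef a k * (real k ^ 3 / (real k + a) - (real k - 1)\<^sup>2)"
        using that by (simp add: of_nat_diff)
      moreover have "(real k)\<^sup>2 * acoef a (Suc k) - (real (k - 1))\<^sup>2 * acoef a (Suc (k - 1)) =
          acoef a k * (real k ^ 3 / (real k + a) - (real k - 1)\<^sup>2)"
        using that by (simp add: acoef_Suc of_nat_diff power2_eq_square power3_eq_cube algebra_simps)
      ultimately show ?thesis by simp
    qed
    show "scaled_qv_entry a x 1 2 n = 1 / (1 + a)\<^sup>2 *
        ((\<Sum>k=1..n. real (k - 1) * acoef a k * x k) / ((real n)\<^sup>2 * acoef a (Suc n)))" if "n \<ge> 1" for n
    proof -
      have "m / (b * A) / m ^ 3 * (S / b) = 1 / b\<^sup>2 * (S / (m\<^sup>2 * A))"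
        if "m > 0" "b > 0" "A > 0" for m b A S :: real
        using that by (simp add: field_simps power2_eq_square power3_eq_cube)
      moreover have "(\<Sum>k=1..n. mcal_coef a 1 k * mcal_coef a 2 k * x k) =
          (\<Sum>k=1..n. real (k - 1) * acoef a k * x k) / (1 + a)"
        unfolding sum_divide_distrib by (intro sum.cong) (auto simp: mcal_coef_1 mcal_coef_2[OF a_gt])
      ultimately show ?thesis
        using \<open>n \<ge> 1\<close> a_gt acoef_pos[OF a_gt]
        unfolding scaled_qv_entry_def Vn_weight_def bcoef_eq_acoef[OF a_gt] by simp
    qed
  qed (use a_lt x in auto)
  then show ?thesis unfolding V_block_def by (simp add: add.commute)
qed

lemma scaled_qv_entry_22_tendsto:
  assumes x: "x \<longlonglongrightarrow> L"
  shows "scaled_qv_entry a x 2 2 \<longlonglongrightarrow> L * V_block a 2 2"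
proof -
  have "scaled_qv_entry a x 2 2 \<longlonglongrightarrow> 1 / (1 + a)\<^sup>2 * (L / 3)"
  proof (rule tendsto_weighted_ratio[where t="\<lambda>k. (real (k - 1))\<^sup>2" and B="\<lambda>n. real n ^ 3"
        and \<rho>="\<lambda>k. (real k ^ 3 - (real k - 1) ^ 3) / (real k - 1)\<^sup>2"])
    show "filterlim (\<lambda>n. \<Sum>k=1..n. (real (k - 1))\<^sup>2) at_top sequentially"
    proof (rule filterlim_sum_at_top_if_ge_harmonic[where \<gamma>=1 and K=2])
      show "1 / real k \<le> (real (k - 1))\<^sup>2" if "k \<ge> 2" for k
      proof -
        have "1 \<le> real (k - 1)" using that by linarith
        then have "1 \<le> (real (k - 1))\<^sup>2" by (simp add: one_le_power)
        moreover have "1 / real k \<le> 1" using that by simp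
        ultimately show ?thesis by linarith
      qed
    qed simp_all
    show "(\<lambda>k. (real k ^ 3 - (real k - 1) ^ 3) / (real k - 1)\<^sup>2) \<longlonglongrightarrow> 3"
      by real_asymp
    show "real k ^ 3 - real (k - 1) ^ 3 = (real (k - 1))\<^sup>2 * ((real k ^ 3 - (real k - 1) ^ 3) / (real k - 1)\<^sup>2)"
      if "k \<ge> 2" for k
    proof -
      have "(real k - 1)\<^sup>2 \<noteq> 0" using that by simp
      then show ?thesis using that by (simp add: of_nat_diff)
    qed
    show "scaled_qv_entry a x 2 2 n = 1 / (1 + a)\<^sup>2 * ((\<Sum>k=1..n. (real (k - 1))\<^sup>2 * x k) / real n ^ 3)" for n
    proof -
      have "(\<Sum>k=1..n. mcal_coef a 2 k * mcal_coef a 2 k * x k) = 1 / (1 + a)\<^sup>2 * (\<Sum>k=1..n. (real (k - 1))\<^sup>2 * x k)"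
        unfolding sum_distrib_left
        by (intro sum.cong) (auto simp: mcal_coef_2[OF a_gt] power2_eq_square)
      then show ?thesis unfolding scaled_qv_entry_def Vn_weight_def by simp
    qed
  qed (use x in auto)
  then show ?thesis unfolding V_block_def by (simp add: add.commute)
qed

end

text \<open>For a = -1 (d = 1, p = 0) the factor 1/(1 + a) of a_2 is 1/0 = 0 in HOL, so a_k = 0 for
  k \<ge> 2; both V and the normalised entries then vanish.\<close>

lemma scaled_qv_entry_tendsto_degenerate: "scaled_qv_entry (-1) x r c \<longlonglongrightarrow> L * V_block (-1) r c"
proof -
  have acoef: "acoef (-1) k = 0" if "k \<ge> 2" for k
    unfolding acoef_def using that by (intro prod_zero) (auto intro!: bexI[of _ 1])
  have "bcoef (-1) n = 1" if "n \<ge> 1" for n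
    using that
  proof (induction n rule: dec_induct)
    case (step n)
    then show ?case by (simp add: bcoef_def acoef)
  qed (simp add: bcoef_def acoef_def)
  then have weight: "Vn_weight (-1) r n = 1" if "n \<ge> 1" for r n
    using that by (simp add: Vn_weight_def)
  have sum_eq: "(\<Sum>k=1..n. mcal_coef (-1) r k * mcal_coef (-1) c k * x k) =
      mcal_coef (-1) r 1 * mcal_coef (-1) c 1 * x 1" if "n \<ge> 1" for n
    using that
  proof (induction n rule: dec_induct)
    case (step n)
    then show ?case by (simp add: mcal_coef_def acoef)
  qed simp
  have "eventually (\<lambda>n. mcal_coef (-1) r 1 * mcal_coef (-1) c 1 * x 1 * (1 / real n ^ 3) =
      scaled_qv_entry (-1) x r c n) sequentially"
    using eventually_ge_at_top[of 1]
  proof eventually_elim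
    case (elim n)
    show ?case unfolding scaled_qv_entry_def weight[OF elim] sum_eq[OF elim] by simp
  qed
  moreover have "(\<lambda>n. mcal_coef (-1) r 1 * mcal_coef (-1) c 1 * x 1 * (1 / real n ^ 3)) \<longlonglongrightarrow> 0"
    by (intro tendsto_mult_right_zero) real_asymp
  ultimately show ?thesis
    by (simp add: V_block_def tendsto_cong)
qed

lemma scaled_qv_entry_tendsto:
  assumes "a \<ge> -1" "a < 1/2" "x \<longlonglongrightarrow> L"
  shows "scaled_qv_entry a x r c \<longlonglongrightarrow> L * V_block a r c"
proof (cases "a = -1")
  case True
  then show ?thesis using scaled_qv_entry_tendsto_degenerate by simp
next
  case False
  then have a: "a > -1" using assms(1) by simp
  have sym: "scaled_qv_entry a x 2 1 = scaled_qv_entry a x 1 2" "V_block a 2 1 = V_block a 1 2"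
    unfolding scaled_qv_entry_def V_block_def by (auto simp: mult_ac)
  consider "r = 1" "c = 1" | "r = 1" "c = 2" | "r = 2" "c = 1" | "r = 2" "c = 2"
    using exhaust_2[of r] exhaust_2[of c] by blast
  then show ?thesis
    using scaled_qv_entry_11_tendsto[OF a assms(2,3)] scaled_qv_entry_12_tendsto[OF a assms(2,3)]
      scaled_qv_entry_22_tendsto[OF a assms(2,3)] sym by cases simp_all
qed

lemma matrix_diag_conj_nth:
  fixes D Q :: "'a::comm_semiring_1^'n^'n"
  assumes D: "\<And>i l. D $ i $ l = (if i = l then f i else 0)"
  shows "(D ** Q ** transpose D) $ i $ l = f i * Q $ i $ l * f l"
proof -
  have DQ: "(D ** Q) $ i $ m = f i * Q $ i $ m" for m
    unfolding matrix_matrix_mult_def by (simp add: D if_distrib[of "\<lambda>x. x * _"] cong: if_cong)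
  show ?thesis
    unfolding matrix_matrix_mult_def[of "D ** Q"] transpose_def
    by (simp add: DQ D if_distrib[of "\<lambda>x. _ * x"] cong: if_cong)
qed

lemma vector_2x2_nth:
  "(vector [vector [x11, x12], vector [x21, x22]] :: 'a::zero^2^2) $ r $ c =
     (if r = 1 then (if c = 1 then x11 else x12) else (if c = 1 then x21 else x22))"
  using exhaust_2[of r] exhaust_2[of c] by auto

lemma erw_Vn_nth:
  "(erw_Vn a n :: real^(2 \<times> 'd::finite)^(2 \<times> 'd)) $ i $ l =
     (if i = l then 1 / (real n * sqrt (real n)) * Vn_weight a (fst i) n else 0)"
proof -
  obtain r j c j' where "i = (r, j)" "l = (c, j')" by (cases i, cases l) auto
  then show ?thesis
    unfolding erw_Vn_def kron_def using exhaust_2[of r] exhaust_2[of c]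
    by (auto simp: vector_2x2_nth mat_def Vn_weight_def)
qed

lemma erw_V_nth:
  "(erw_V a :: real^(2 \<times> 'd::finite)^(2 \<times> 'd)) $ (r, j) $ (c, j') =
     (if j = j' then 1 / real CARD('d) else 0) * V_block a r c"
  unfolding erw_V_def kron_def V_block_def using exhaust_2[of r] exhaust_2[of c]
  by (auto simp: vector_2x2_nth mat_def)

lemma erw_Vn_conj_nth:
  fixes Q :: "real^(2 \<times> 'd::finite)^(2 \<times> 'd)"
  shows "(erw_Vn a n ** Q ** transpose (erw_Vn a n)) $ (r, j) $ (c, j') =
    Vn_weight a r n * Vn_weight a c n / real n ^ 3 * Q $ (r, j) $ (c, j')"
proof -
  have "(erw_Vn a n ** Q ** transpose (erw_Vn a n)) $ (r, j) $ (c, j') =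
      (1 / (real n * sqrt (real n)))\<^sup>2 * (Vn_weight a r n * Vn_weight a c n * Q $ (r, j) $ (c, j'))"
    unfolding matrix_diag_conj_nth[OF erw_Vn_nth] by (simp add: power2_eq_square mult_ac)
  also have "(1 / (real n * sqrt (real n)))\<^sup>2 = 1 / real n ^ 3"
    by (simp add: power_mult_distrib power_divide power3_eq_cube power2_eq_square)
  finally show ?thesis by simp
qed

context elephant_walk
begin

lemma AE_pred_qv_erw_Mcal_nth:
  "AE \<omega> in M. \<forall>n i l. pred_qv M F (erw_Mcal a X) n \<omega> $ i $ l =
     (\<Sum>k=1..n. mcal_coef a (fst i) k * mcal_coef a (fst l) k * cond_cov p a (k - 1) (history X (k - 1) \<omega>) (snd i) (snd l))"
  using cond_exp_erw_Mcal_increments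
proof eventually_elim
  case (elim \<omega>)
  have "real_cond_exp M (F (k - 1))
      (\<lambda>\<omega>'. (erw_Mcal a X k \<omega>' - erw_Mcal a X (k - 1) \<omega>') $ i * (erw_Mcal a X k \<omega>' - erw_Mcal a X (k - 1) \<omega>') $ l) \<omega>
    = mcal_coef a (fst i) k * mcal_coef a (fst l) k * cond_cov p a (k - 1) (history X (k - 1) \<omega>) (snd i) (snd l)"
    if "k \<ge> 1" for k i l
    using elim[rule_format, of "k - 1" i l] that by simp
  then show ?case
    unfolding pred_qv_def sum_component by (auto intro!: sum.cong)
qed

lemma AE_scaled_pred_qv_tendsto:
  assumes "a < 1/2"
  shows "AE \<omega> in M. (\<lambda>n. erw_Vn a n ** pred_qv M F (erw_Mcal a X) n \<omega> ** transpose (erw_Vn a n))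
                        \<longlonglongrightarrow> (erw_V a :: real ^ (2 \<times> 'd) ^ (2 \<times> 'd))"
  using AE_pred_qv_erw_Mcal_nth AE_cond_cov_tendsto[OF assms]
proof eventually_elim
  case (elim \<omega>)
  show ?case
  proof (intro vec_tendstoI)
    fix i l :: "2 \<times> 'd"
    obtain r j c j' where i: "i = (r, j)" and l: "l = (c, j')" by (cases i, cases l) auto
    define x where "x k = cond_cov p a (k - 1) (history X (k - 1) \<omega>) j j'" for k
    have "x \<longlonglongrightarrow> (if j = j' then 1 / real CARD('d) else 0)"
      unfolding x_def by (rule LIMSEQ_imp_Suc) (use elim(2) in simp)
    then have "scaled_qv_entry a x r c \<longlonglongrightarrow> erw_V a $ i $ l"
      unfolding i l erw_V_nth using scaled_qv_entry_tendsto[OF _ assms] erw_a_ge p_nonneg a_eq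
      by (simp add: Suc_leI)
    moreover have "(erw_Vn a n ** pred_qv M F (erw_Mcal a X) n \<omega> ** transpose (erw_Vn a n)) $ i $ l =
        scaled_qv_entry a x r c n" for n
      unfolding i l erw_Vn_conj_nth scaled_qv_entry_def x_def using elim(1) by simp
    ultimately show "(\<lambda>n. (erw_Vn a n ** pred_qv M F (erw_Mcal a X) n \<omega> ** transpose (erw_Vn a n)) $ i $ l)
        \<longlonglongrightarrow> erw_V a $ i $ l"
      by simp
  qed
qed

end

theorem lemma3p1:
  fixes M :: "'a measure" and X :: "nat \<Rightarrow> 'a \<Rightarrow> 'd::finite \<times> bool" and p a :: real
  assumes "0 \<le> p" and "p \<le> 1"
    and "is_erw M p X"
    and "a = erw_a CARD('d) p"
  shows "sq_int_martingale M (erw_filtr M X) (erw_Mcal a X)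
    \<and> (a < 1 / 2 \<longrightarrow>
         (AE \<omega> in M. (\<lambda>n. erw_Vn a n ** pred_qv M (erw_filtr M X) (erw_Mcal a X) n \<omega>
                              ** transpose (erw_Vn a n))
                        \<longlonglongrightarrow> (erw_V a :: real ^ (2 \<times> 'd) ^ (2 \<times> 'd))))"
proof -
  interpret elephant_walk M X p a
    using assms by unfold_locales auto
  show ?thesis
    using sq_int_martingale_erw_Mcal AE_scaled_pred_qv_tendsto by blast
qed

end
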